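(* Let $(E,(\cdot,\cdot),\mathcal H)$ be an extended affine Lie algebra with root system $R$. Let $R'$ be a finite closed subsystem of $R$ and $\mathcal H'\subseteq\mathcal H$ a cover for $R'$. Then the Lie cover $E_{R',\mathcal H'}$ is a finite-dimensional reductive Lie algebra. In particular, with $\mathcal H_{R'}:=\sum_{\alpha\in R'}\mathbb Ct_\alpha$, the Lie cover $E_{R',\mathcal H_{R'}}$ is a finite-dimensional simple Lie algebra with root system $R'$.
   Context: All Lie algebras are over $\mathbb C$. An extended affine Lie algebra (EALA) is a triple $(E,(\cdot,\cdot),\mathcal H)$ where $E$ is a Lie algebra, $\mathcal H$ a subalgebra and $(\cdot,\cdot)$ a bilinear form on $E$ such that: (EA1) symmetric, non-degenerate, invariant form; (EA2) $\mathcal H$ finite-dimensional, $E=\bigoplus_{\alpha\in\mathcal H^*}E_\alpha$, $E_\alpha=\{x:[h,x]=\alpha(h)x\ \forall h\in\mathcal H\}$, $E_0=\mathcal H$; root system $R=\{\alpha:E_\alpha\neq0\}$; $t_\alpha\in\mathcal H$ given by $\alpha(h)=(h,t_\alpha)$, $(\alpha,\beta):=(t_\alpha,t_\beta)$, $R^\times=\{\alpha\in R:(\alpha,\alpha)\ne0\}$, $R^0=R\setminus R^\times$; (EA3) $\mathrm{ad}\,x$ locally nilpotent for $x\in E_\alpha$, $\alpha\in R^\times$; (EA4) $R$ discrete; (EA5) $R^\times$ connected (not a union of two nonempty mutually orthogonal subsets) and every isotropic root non-isolated. Root systems are assumed reduced. An extended affine root system (EARS) is a triple $(R,(\cdot,\cdot),\mathcal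 V)$, $\mathcal V$ finite-dimensional real, form symmetric positive semidefinite, $R\subseteq\mathcal V$ with: $0\in R$; $R=-R$; $R$ spans $\mathcal V$; $\alpha\in R^\times\Rightarrow2\alpha\notin R$; $R$ discrete; root string property (for $\alpha\in R^\times,\beta\in R$ there are integers $d,u\ge0$ with $(\beta+\mathbb Z\alpha)\cap R=\{\beta-d\alpha,\dots,\beta+u\alpha\}$, $2(\beta,\alpha)/(\alpha,\alpha)=d-u$); isotropic roots non-isolated; $R^\times$ connected. A subsystem of $R$ is $R'\subseteq R$ with $(R',(\cdot,\cdot)|,\mathrm{span}_{\mathbb R}R')$ an EARS; closed means $(R'+R')\cap R\subseteq R'$. A cover of a closed subsystem $R'$ is a subspace $\mathcal H'\subseteq\mathcal H$ with $t_\alpha\in\mathcal H'$ for all $\alpha\in R'^\times$ and the form non-degenerate on $\mathcal H'$; the Lie cover is $E_{R',\mathcal H'}=\mathcal H'\oplus\sum_{\alpha\in R'\setminus\{0\}}E_\alpha$ with the bracket of $E$. *)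

theory Defs
  imports "HOL-Analysis.Analysis"
begin

text \<open>A complex vector space is modelled as a type 'a of class ab_group_add together
with a scalar multiplication smul :: complex => 'a => 'a satisfying the vector_space
axioms.  The Lie algebra E is the whole type 'a, with bracket br.
Linear functionals on H (elements of H-star) are functions 'a => complex that are
linear on H and are normalised to vanish outside H (so that H-star is identified
with a set of functions faithfully).\<close>

definition lie_algebra :: "(complex \<Rightarrow> 'a::ab_group_add \<Rightarrow> 'a) \<Rightarrow> ('a \<Rightarrow> 'a \<Rightarrow> 'a) \<Rightarrow> bool" where
  "lie_algebra smul br \<longleftrightarrow>
     vector_space smul \<and>
     (\<forall>a b x y z. br (smul a x + smul b y) z = smul a (br x z) + smul b (br y z)) \<and>
     (\<forall>x. br x x = 0) \<and>
     (\<forall>x y z. br x (br y z) + br y (br z x) + br z (br x y) = 0)"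

definition lie_subalgebra :: "(complex \<Rightarrow> 'a::ab_group_add \<Rightarrow> 'a) \<Rightarrow> ('a \<Rightarrow> 'a \<Rightarrow> 'a) \<Rightarrow> 'a set \<Rightarrow> bool" where
  "lie_subalgebra smul br L \<longleftrightarrow> module.subspace smul L \<and> (\<forall>x\<in>L. \<forall>y\<in>L. br x y \<in> L)"

definition lie_ideal :: "(complex \<Rightarrow> 'a::ab_group_add \<Rightarrow> 'a) \<Rightarrow> ('a \<Rightarrow> 'a \<Rightarrow> 'a) \<Rightarrow> 'a set \<Rightarrow> 'a set \<Rightarrow> bool" where
  "lie_ideal smul br L I \<longleftrightarrow> module.subspace smul I \<and> I \<subseteq> L \<and> (\<forall>x\<in>L. \<forall>y\<in>I. br x y \<in> I)"

definition fin_dim :: "(complex \<Rightarrow> 'a::ab_group_add \<Rightarrow> 'a) \<Rightarrow> 'a set \<Rightarrow> bool" where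
  "fin_dim smul S \<longleftrightarrow> (\<exists>F. finite F \<and> S \<subseteq> module.span smul F)"

text \<open>Reductive (Bourbaki): the adjoint representation is completely reducible, i.e.
every ideal has a complementary ideal.\<close>
definition reductive_lie :: "(complex \<Rightarrow> 'a::ab_group_add \<Rightarrow> 'a) \<Rightarrow> ('a \<Rightarrow> 'a \<Rightarrow> 'a) \<Rightarrow> 'a set \<Rightarrow> bool" where
  "reductive_lie smul br L \<longleftrightarrow> lie_subalgebra smul br L \<and>
     (\<forall>I. lie_ideal smul br L I \<longrightarrow>
        (\<exists>J. lie_ideal smul br L J \<and> I \<inter> J = {0} \<and> L = {x + y |x y. x \<in> I \<and> y \<in> J}))"

definition simple_lie :: "(complex \<Rightarrow> 'a::ab_group_add \<Rightarrow> 'a) \<Rightarrow> ('a \<Rightarrow> 'a \<Rightarrow> 'a) \<Rightarrow> 'a set \<Rightarrow> bool" where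
  "simple_lie smul br L \<longleftrightarrow> lie_subalgebra smul br L \<and>
     (\<exists>x\<in>L. \<exists>y\<in>L. br x y \<noteq> 0) \<and>
     (\<forall>I. lie_ideal smul br L I \<longrightarrow> I = {0} \<or> I = L)"

definition lin_functional :: "(complex \<Rightarrow> 'a::ab_group_add \<Rightarrow> 'a) \<Rightarrow> 'a set \<Rightarrow> ('a \<Rightarrow> complex) \<Rightarrow> bool" where
  "lin_functional smul H \<alpha> \<longleftrightarrow>
     (\<forall>x\<in>H. \<forall>y\<in>H. \<forall>a b. \<alpha> (smul a x + smul b y) = a * \<alpha> x + b * \<alpha> y) \<and>
     (\<forall>x. x \<notin> H \<longrightarrow> \<alpha> x = 0)"

definition root_space :: "(complex \<Rightarrow> 'a::ab_group_add \<Rightarrow> 'a) \<Rightarrow> ('a \<Rightarrow> 'a \<Rightarrow> 'a) \<Rightarrow> 'a set \<Rightarrow> ('a \<Rightarrow> complex) \<Rightarrow> 'a set" where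
  "root_space smul br H \<alpha> = {x. \<forall>h\<in>H. br h x = smul (\<alpha> h) x}"

text \<open>Roots of (L, H): functionals on H whose weight space inside L is nonzero
(0 included, as in the paper's convention).\<close>
definition roots_in :: "(complex \<Rightarrow> 'a::ab_group_add \<Rightarrow> 'a) \<Rightarrow> ('a \<Rightarrow> 'a \<Rightarrow> 'a) \<Rightarrow> 'a set \<Rightarrow> 'a set \<Rightarrow> ('a \<Rightarrow> complex) set" where
  "roots_in smul br L H = {\<alpha>. lin_functional smul H \<alpha> \<and> root_space smul br H \<alpha> \<inter> L \<noteq> {0}}"

abbreviation roots :: "(complex \<Rightarrow> 'a::ab_group_add \<Rightarrow> 'a) \<Rightarrow> ('a \<Rightarrow> 'a \<Rightarrow> 'a) \<Rightarrow> 'a set \<Rightarrow> ('a \<Rightarrow> complex) set" where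
  "roots smul br H \<equiv> roots_in smul br UNIV H"

definition tvec :: "('a \<Rightarrow> 'a \<Rightarrow> complex) \<Rightarrow> 'a set \<Rightarrow> ('a \<Rightarrow> complex) \<Rightarrow> 'a" where
  "tvec B H \<alpha> = (THE t. t \<in> H \<and> (\<forall>h\<in>H. \<alpha> h = B h t))"

definition rform :: "('a \<Rightarrow> 'a \<Rightarrow> complex) \<Rightarrow> 'a set \<Rightarrow> ('a \<Rightarrow> complex) \<Rightarrow> ('a \<Rightarrow> complex) \<Rightarrow> complex" where
  "rform B H \<alpha> \<beta> = B (tvec B H \<alpha>) (tvec B H \<beta>)"

definition aniso :: "('a \<Rightarrow> 'a \<Rightarrow> complex) \<Rightarrow> 'a set \<Rightarrow> ('a \<Rightarrow> complex) set \<Rightarrow> ('a \<Rightarrow> complex) set" where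
  "aniso B H S = {\<alpha> \<in> S. rform B H \<alpha> \<alpha> \<noteq> 0}"

text \<open>Discreteness of a set of linear functionals on the finite-dimensional space H
(w.r.t. the standard topology of H-star, measured by evaluation on a finite spanning set).\<close>
definition discrete_fun :: "(complex \<Rightarrow> 'a::ab_group_add \<Rightarrow> 'a) \<Rightarrow> 'a set \<Rightarrow> ('a \<Rightarrow> complex) set \<Rightarrow> bool" where
  "discrete_fun smul H S \<longleftrightarrow> (\<exists>F. finite F \<and> F \<subseteq> H \<and> H \<subseteq> module.span smul F \<and>
     (\<forall>\<alpha>\<in>S. \<exists>e>0. \<forall>\<beta>\<in>S. \<beta> \<noteq> \<alpha> \<longrightarrow> (\<exists>h\<in>F. cmod (\<beta> h - \<alpha> h) \<ge> e)))"

definition connected_roots :: "('a \<Rightarrow> 'a \<Rightarrow> complex) \<Rightarrow> 'a set \<Rightarrow> ('a \<Rightarrow> complex) set \<Rightarrow> bool" where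
  "connected_roots B H S \<longleftrightarrow> \<not> (\<exists>A1 A2. A1 \<noteq> {} \<and> A2 \<noteq> {} \<and> A1 \<union> A2 = aniso B H S \<and>
      (\<forall>a\<in>A1. \<forall>b\<in>A2. rform B H a b = 0))"

text \<open>Isotropic roots are non-isolated: R0 is contained in Rx - Rx.\<close>
definition nonisolated :: "('a \<Rightarrow> 'a \<Rightarrow> complex) \<Rightarrow> 'a set \<Rightarrow> ('a \<Rightarrow> complex) set \<Rightarrow> bool" where
  "nonisolated B H S \<longleftrightarrow> (\<forall>\<delta>\<in>S - aniso B H S. \<exists>\<alpha>\<in>aniso B H S.
      (\<lambda>h. \<alpha> h + \<delta> h) \<in> aniso B H S)"

definition reduced_roots :: "('a \<Rightarrow> 'a \<Rightarrow> complex) \<Rightarrow> 'a set \<Rightarrow> ('a \<Rightarrow> complex) set \<Rightarrow> bool" where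
  "reduced_roots B H S \<longleftrightarrow> (\<forall>\<alpha>\<in>aniso B H S. (\<lambda>h. 2 * \<alpha> h) \<notin> S)"

definition eala :: "(complex \<Rightarrow> 'a::ab_group_add \<Rightarrow> 'a) \<Rightarrow> ('a \<Rightarrow> 'a \<Rightarrow> 'a) \<Rightarrow> ('a \<Rightarrow> 'a \<Rightarrow> complex) \<Rightarrow> 'a set \<Rightarrow> bool" where
  "eala smul br B H \<longleftrightarrow>
     lie_algebra smul br \<and>
     \<comment> \<open>EA1\<close>
     (\<forall>a b x y z. B (smul a x + smul b y) z = a * B x z + b * B y z) \<and>
     (\<forall>x y. B x y = B y x) \<and>
     (\<forall>x. (\<forall>y. B x y = 0) \<longrightarrow> x = 0) \<and>
     (\<forall>x y z. B (br x y) z = B x (br y z)) \<and>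
     \<comment> \<open>EA2\<close>
     lie_subalgebra smul br H \<and> fin_dim smul H \<and>
     (\<forall>x. \<exists>F c. finite F \<and> (\<forall>\<alpha>\<in>F. lin_functional smul H \<alpha> \<and> c \<alpha> \<in> root_space smul br H \<alpha>)
              \<and> x = sum c F) \<and>
     (\<forall>F c. finite F \<and> (\<forall>\<alpha>\<in>F. lin_functional smul H \<alpha> \<and> c \<alpha> \<in> root_space smul br H \<alpha>)
              \<and> sum c F = 0 \<longrightarrow> (\<forall>\<alpha>\<in>F. c \<alpha> = 0)) \<and>
     root_space smul br H (\<lambda>_. 0) = H \<and>
     \<comment> \<open>EA3\<close>
     (\<forall>\<alpha>\<in>aniso B H (roots smul br H). \<forall>x\<in>root_space smul br H \<alpha>. \<forall>y. \<exists>n. (br x ^^ n) y = 0) \<and>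
     \<comment> \<open>EA4\<close>
     discrete_fun smul H (roots smul br H) \<and>
     \<comment> \<open>EA5\<close>
     connected_roots B H (roots smul br H) \<and> nonisolated B H (roots smul br H) \<and>
     \<comment> \<open>reducedness\<close>
     reduced_roots B H (roots smul br H)"

definition rspan :: "('a \<Rightarrow> complex) set \<Rightarrow> ('a \<Rightarrow> complex) set" where
  "rspan S = {f. \<exists>F c. finite F \<and> F \<subseteq> S \<and> f = (\<lambda>h. \<Sum>\<alpha>\<in>F. complex_of_real (c \<alpha>) * \<alpha> h)}"

definition ears :: "(complex \<Rightarrow> 'a::ab_group_add \<Rightarrow> 'a) \<Rightarrow> ('a \<Rightarrow> 'a \<Rightarrow> complex) \<Rightarrow> 'a set \<Rightarrow> ('a \<Rightarrow> complex) set \<Rightarrow> bool" where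
  "ears smul B H S \<longleftrightarrow>
     (\<forall>v\<in>rspan S. \<forall>w\<in>rspan S. Im (rform B H v w) = 0) \<and>
     (\<forall>v\<in>rspan S. Re (rform B H v v) \<ge> 0) \<and>
     (\<lambda>_. 0) \<in> S \<and>
     (\<forall>\<alpha>\<in>S. (\<lambda>h. - \<alpha> h) \<in> S) \<and>
     reduced_roots B H S \<and>
     discrete_fun smul H S \<and>
     (\<forall>\<alpha>\<in>aniso B H S. \<forall>\<beta>\<in>S. \<exists>d u :: nat.
        {k :: int. (\<lambda>h. \<beta> h + of_int k * \<alpha> h) \<in> S} = {- int d .. int u} \<and>
        2 * rform B H \<beta> \<alpha> / rform B H \<alpha> \<alpha> = of_int (int d - int u)) \<and>
     nonisolated B H S \<and>
     connected_roots B H S"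

definition subsystem :: "(complex \<Rightarrow> 'a::ab_group_add \<Rightarrow> 'a) \<Rightarrow> ('a \<Rightarrow> 'a \<Rightarrow> complex) \<Rightarrow> 'a set \<Rightarrow> ('a \<Rightarrow> complex) set \<Rightarrow> ('a \<Rightarrow> complex) set \<Rightarrow> bool" where
  "subsystem smul B H R S \<longleftrightarrow> S \<subseteq> R \<and> ears smul B H S"

definition closed_sub :: "('a \<Rightarrow> complex) set \<Rightarrow> ('a \<Rightarrow> complex) set \<Rightarrow> bool" where
  "closed_sub R S \<longleftrightarrow> (\<forall>\<alpha>\<in>S. \<forall>\<beta>\<in>S. (\<lambda>h. \<alpha> h + \<beta> h) \<in> R \<longrightarrow> (\<lambda>h. \<alpha> h + \<beta> h) \<in> S)"

definition is_cover :: "(complex \<Rightarrow> 'a::ab_group_add \<Rightarrow> 'a) \<Rightarrow> ('a \<Rightarrow> 'a \<Rightarrow> complex) \<Rightarrow> 'a set \<Rightarrow> ('a \<Rightarrow> complex) set \<Rightarrow> 'a set \<Rightarrow> bool" where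
  "is_cover smul B H S H' \<longleftrightarrow> module.subspace smul H' \<and> H' \<subseteq> H \<and>
     (\<forall>\<alpha>\<in>aniso B H S. tvec B H \<alpha> \<in> H') \<and>
     (\<forall>x\<in>H'. (\<forall>y\<in>H'. B x y = 0) \<longrightarrow> x = 0)"

definition lie_cover :: "(complex \<Rightarrow> 'a::ab_group_add \<Rightarrow> 'a) \<Rightarrow> ('a \<Rightarrow> 'a \<Rightarrow> 'a) \<Rightarrow> 'a set \<Rightarrow> ('a \<Rightarrow> complex) set \<Rightarrow> 'a set \<Rightarrow> 'a set" where
  "lie_cover smul br H S H' = module.span smul (H' \<union> (\<Union>\<alpha>\<in>S - {\<lambda>_. 0}. root_space smul br H \<alpha>))"

definition hsub :: "(complex \<Rightarrow> 'a::ab_group_add \<Rightarrow> 'a) \<Rightarrow> ('a \<Rightarrow> 'a \<Rightarrow> complex) \<Rightarrow> 'a set \<Rightarrow> ('a \<Rightarrow> complex) set \<Rightarrow> 'a set" where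
  "hsub smul B H S = module.span smul (tvec B H ` S)"

definition restrict_fun :: "('a \<Rightarrow> complex) \<Rightarrow> 'a set \<Rightarrow> ('a \<Rightarrow> complex)" where
  "restrict_fun \<alpha> K = (\<lambda>h. if h \<in> K then \<alpha> h else 0)"

end

theory Submission
  imports Defs
begin

text \<open>
  The Lie cover \<open>L\<^sub>K\<close>, spanned by \<open>K\<close> and the root spaces \<open>E\<^sub>\<alpha>\<close> with \<open>0 \<noteq> \<alpha> \<in> R'\<close>,
  is closed under the bracket because \<open>R'\<close> is closed, and it is finite-dimensional because
  each of these root spaces is a line (an \<open>sl\<^sub>2\<close>-argument using local nilpotency of \<open>ad\<close>).
  Being finite, \<open>R'\<close> has no nonzero isotropic roots: an isotropic \<open>\<delta> \<noteq> 0\<close> would put the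
  infinite string \<open>\<alpha> + k\<delta>\<close> into \<open>R'\<close>. Hence the reflections \<open>s\<^sub>\<alpha>\<close> permute the finite set
  of coroots \<open>t\<^sub>\<alpha>\<close>, and averaging over the group they generate shows that no nonzero vector
  of \<open>T = span {t\<^sub>\<alpha>}\<close> is killed by all roots. So the form is non-degenerate on \<open>T\<close>, every
  cover splits as \<open>K = T + Z\<close> with \<open>Z\<close> killed by \<open>R'\<close>, and \<open>L\<^sub>K = L\<^sub>T + Z\<close> with \<open>Z\<close> central.
  The ideal \<open>L\<^sub>T\<close> is simple: an ideal containing a root vector contains, by connectedness of
  \<open>R'\<^sup>\<times>\<close>, all \<open>t\<^sub>\<alpha>\<close> and all root spaces, while an ideal without root vectors lies in \<open>T\<close>
  and is killed by all roots, hence is zero. A simple ideal with a central complement makes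
  \<open>L\<^sub>K\<close> reductive.
\<close>

context vector_space
begin

lemma subspace_complement:
  assumes U: "subspace U" and W: "subspace W" and UW: "U \<subseteq> W"
  obtains C where "subspace C" "C \<subseteq> W" "U \<inter> C = {0}" "W = {u + c |u c. u \<in> U \<and> c \<in> C}"
proof -
  obtain BU where BU: "BU \<subseteq> U" "independent BU" "U \<subseteq> span BU"
    using maximal_independent_subset by blast
  obtain BW where BW: "BU \<subseteq> BW" "BW \<subseteq> W" "independent BW" "W \<subseteq> span BW"
    using maximal_independent_subset_extend[of BU W] BU UW by blast
  have span_BU: "span BU = U"
    using span_subspace[OF BU(1,3) U] .
  define C where "C = span (BW - BU)"
  have "x = 0" if x: "x \<in> U" "x \<in> C" for x
  proof -
    have "representation BW x = representation BU x"
      using representation_extend[OF BW(3) _ BW(1)] x(1) span_BU by simp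
    moreover have "representation BW x = representation (BW - BU) x"
      using representation_extend[OF BW(3)] x(2) unfolding C_def by blast
    ultimately have "representation BW x b = 0" for b
      using representation_ne_zero[of BU x b] representation_ne_zero[of "BW - BU" x b] by auto
    moreover have "x \<in> span BW"
      using x(1) span_BU span_mono[OF BW(1)] by blast
    ultimately show "x = 0"
      using sum_nonzero_representation_eq[OF BW(3) \<open>x \<in> span BW\<close>] by simp
  qed
  then have "U \<inter> C = {0}"
    using U subspace_0 span_zero unfolding C_def by blast
  moreover have "W \<subseteq> {u + c |u c. u \<in> U \<and> c \<in> C}"
    using BW(1,4) span_Un[of BU "BW - BU"] span_BU unfolding C_def
    by (simp add: Un_absorb1)
  moreover have "C \<subseteq> W"
    unfolding C_def using BW(2) W span_minimal by blast
  moreover have "{u + c |u c. u \<in> U \<and> c \<in> C} \<subseteq> W"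
    using \<open>C \<subseteq> W\<close> UW W subspace_add by blast
  ultimately show thesis
    using that[of C] unfolding C_def by blast
qed

lemma dim_less_if_not_mem:
  assumes S: "subspace S" and ST: "S \<subseteq> T" and u: "u \<in> T" "u \<notin> S"
    and F: "finite F" "T \<subseteq> span F"
  shows "dim S < dim T"
proof -
  obtain BS where BS: "BS \<subseteq> S" "independent BS" "S \<subseteq> span BS" "card BS = dim S"
    by (rule basis_exists)
  obtain BT where BT: "BT \<subseteq> T" "independent BT" "T \<subseteq> span BT" "card BT = dim T"
    by (rule basis_exists)
  have "BS \<subseteq> span F" "BT \<subseteq> span F"
    using BS(1) BT(1) ST F(2) by blast+
  then have fin: "finite BS" "finite BT"
    using independent_span_bound[OF F(1)] BS(2) BT(2) by blast+
  have "u \<notin> span BS"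
    using span_subspace[OF BS(1,3) S] u(2) by simp
  then have indep: "independent (insert u BS)" and "u \<notin> BS"
    using independent_insertI[OF _ BS(2)] span_base by blast+
  have "insert u BS \<subseteq> span BT"
    using BS(1) BT(3) ST u(1) by blast
  then have "card (insert u BS) \<le> card BT"
    using independent_span_bound[OF fin(2) indep] by blast
  then show ?thesis
    using BS(4) BT(4) fin(1) \<open>u \<notin> BS\<close> by simp
qed

end

locale symmetric_form = vector_space scale
  for scale :: "'f::field_char_0 \<Rightarrow> 'v::ab_group_add \<Rightarrow> 'v" +
  fixes B :: "'v \<Rightarrow> 'v \<Rightarrow> 'f"
  assumes form_add_left: "B (x + y) z = B x z + B y z"
    and form_scale_left: "B (scale c x) z = c * B x z"
    and form_commute: "B x y = B y x"
begin

lemma form_add_right: "B x (y + z) = B x y + B x z"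
  by (simp add: form_commute[of x] form_add_left)

lemma form_scale_right: "B x (scale c y) = c * B x y"
  by (simp add: form_commute[of x] form_scale_left)

lemma form_zero_left [simp]: "B 0 y = 0"
  using form_scale_left[of 0 0 y] by simp

lemma form_zero_right [simp]: "B x 0 = 0"
  using form_scale_right[of x 0 0] by simp

lemma form_diff_left: "B (x - y) z = B x z - B y z"
  using form_add_left[of "x - y" y z] by simp

lemma form_diff_right: "B x (y - z) = B x y - B x z"
  by (simp add: form_commute[of x] form_diff_left)

lemma form_neg_left: "B (- x) z = - B x z"
  using form_diff_left[of 0 x z] by simp

lemma form_sum_right: "B x (sum f A) = (\<Sum>a\<in>A. B x (f a))"
  by (induction A rule: infinite_finite_induct) (simp_all add: form_add_right)

lemma subspace_orthogonal: "subspace {x. B x u = 0}"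
  by (simp add: subspace_def form_add_left form_scale_left)

lemma form_vanishes_if_isotropic:
  assumes "subspace S" and iso: "\<And>u. u \<in> S \<Longrightarrow> B u u = 0" and "x \<in> S" "y \<in> S"
  shows "B x y = 0"
proof -
  have "B (x + y) (x + y) = B x x + 2 * B x y + B y y"
    by (simp add: form_add_left form_add_right form_commute[of y x])
  moreover have "B (x + y) (x + y) = 0" "B x x = 0" "B y y = 0"
    using iso assms(1,3,4) subspace_add by blast+
  ultimately show ?thesis
    by simp
qed

definition nondegenerate_on :: "'v set \<Rightarrow> bool" where
  "nondegenerate_on S \<longleftrightarrow> (\<forall>x\<in>S. (\<forall>y\<in>S. B x y = 0) \<longrightarrow> x = 0)"

lemma nondegenerate_on_orthogonal:
  assumes S: "subspace S" "nondegenerate_on S" and u: "u \<in> S" "B u u \<noteq> 0"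
  shows "nondegenerate_on (S \<inter> {x. B x u = 0})"
  unfolding nondegenerate_on_def
proof (intro ballI impI)
  fix x assume x: "x \<in> S \<inter> {x. B x u = 0}" and orth: "\<forall>y\<in>S \<inter> {x. B x u = 0}. B x y = 0"
  have "B x y = 0" if y: "y \<in> S" for y
  proof -
    define y' where "y' = y - scale (B y u / B u u) u"
    have "y' \<in> S \<inter> {x. B x u = 0}"
      using y u S(1) by (simp add: y'_def subspace_diff subspace_scale form_diff_left form_scale_left)
    moreover have "B x y = B x y' + (B y u / B u u) * B x u"
      by (simp add: y'_def form_diff_right form_scale_right)
    ultimately show ?thesis
      using orth x by simp
  qed
  then show "x = 0"
    using S(2) x unfolding nondegenerate_on_def by blast
qed

lemma representer_extend_orthogonal:
  assumes S: "subspace S" and u: "u \<in> S" "B u u \<noteq> 0"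
    and t': "t' \<in> S" "B t' u = 0" "\<forall>y\<in>S \<inter> {x. B x u = 0}. B h y = B t' y"
  shows "\<forall>y\<in>S. B h y = B (t' + scale (B h u / B u u) u) y"
proof
  fix y assume y: "y \<in> S"
  define c where "c = B y u / B u u"
  have "y - scale c u \<in> S \<inter> {x. B x u = 0}"
    using y u S by (simp add: c_def subspace_diff subspace_scale form_diff_left form_scale_left)
  then have "B h (y - scale c u) = B t' (y - scale c u)"
    using t'(3) by blast
  moreover have "B u y = B y u"
    by (rule form_commute)
  ultimately show "B h y = B (t' + scale (B h u / B u u) u) y"
    using u(2) t'(2)
    by (simp add: c_def form_add_left form_scale_left form_diff_right form_scale_right field_simps)
qed

text \<open>Induction on the dimension: split off an anisotropic vector \<open>u\<close> (which exists unless the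
  form vanishes on \<open>S\<close>) and recurse on its orthogonal complement in \<open>S\<close>.\<close>

lemma nondegenerate_subspace_representer:
  assumes "subspace S" "finite F" "S \<subseteq> span F" "nondegenerate_on S"
  shows "\<exists>t\<in>S. \<forall>y\<in>S. B h y = B t y"
  using assms
proof (induction "dim S" arbitrary: S rule: less_induct)
  case less
  show ?case
  proof (cases "\<exists>u\<in>S. B u u \<noteq> 0")
    case False
    then have "S \<subseteq> {0}"
      using less.prems(1,4) form_vanishes_if_isotropic unfolding nondegenerate_on_def by blast
    then show ?thesis
      using less.prems(1) subspace_0 by (intro bexI[of _ 0]) auto
  next
    case True
    then obtain u where u: "u \<in> S" "B u u \<noteq> 0"
      by blast
    define S' where "S' = S \<inter> {x. B x u = 0}"
    have S': "subspace S'" "nondegenerate_on S'" "S' \<subseteq> span F"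
      using subspace_inter[OF less.prems(1) subspace_orthogonal] nondegenerate_on_orthogonal[OF _ _ u]
        less.prems unfolding S'_def by blast+
    have "dim S' < dim S"
      using dim_less_if_not_mem[OF S'(1) _ u(1) _ less.prems(2,3)] u(2) by (auto simp: S'_def)
    then obtain t' where t': "t' \<in> S'" "\<forall>y\<in>S'. B h y = B t' y"
      using less.hyps S' less.prems(2) by blast
    have t'_S: "t' \<in> S" "B t' u = 0"
      using t'(1) by (simp_all add: S'_def)
    have "t' + scale (B h u / B u u) u \<in> S"
      using t'_S(1) u(1) less.prems(1) by (simp add: subspace_add subspace_scale)
    moreover have "\<forall>y\<in>S. B h y = B (t' + scale (B h u / B u u) u) y"
      using representer_extend_orthogonal[OF less.prems(1) u t'_S t'(2)[unfolded S'_def]] .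
    ultimately show ?thesis
      by blast
  qed
qed

end

locale complex_lie_algebra = vector_space smul
  for smul :: "complex \<Rightarrow> 'a::ab_group_add \<Rightarrow> 'a" +
  fixes br :: "'a \<Rightarrow> 'a \<Rightarrow> 'a"
  assumes bracket_add_left: "br (x + y) z = br x z + br y z"
    and bracket_scale_left: "br (smul c x) z = smul c (br x z)"
    and bracket_anticommute: "br x y = - br y x"
    and bracket_leibniz: "br x (br y z) = br (br x y) z + br y (br x z)"
begin

lemma bracket_add_right: "br x (y + z) = br x y + br x z"
proof -
  have "br x (y + z) = - (br y x + br z x)"
    using bracket_anticommute[of x "y + z"] by (simp only: bracket_add_left)
  then show ?thesis
    using bracket_anticommute[of y x] bracket_anticommute[of z x] by simp
qed

lemma bracket_scale_right: "br x (smul c y) = smul c (br x y)"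
proof -
  have "br x (smul c y) = - smul c (br y x)"
    using bracket_anticommute[of x "smul c y"] by (simp only: bracket_scale_left)
  then show ?thesis
    using bracket_anticommute[of y x] by simp
qed

lemma bracket_zero_left [simp]: "br 0 y = 0"
  using bracket_scale_left[of 0 0 y] by simp

lemma bracket_zero_right [simp]: "br x 0 = 0"
  using bracket_scale_right[of x 0 0] by simp

lemma bracket_diff_right: "br x (y - z) = br x y - br x z"
  using bracket_add_right[of x "y - z" z] by simp

lemma bracket_neg_right [simp]: "br x (- y) = - br x y"
  using bracket_diff_right[of x 0 y] by simp

lemma bracket_sum_right: "br x (sum f A) = (\<Sum>a\<in>A. br x (f a))"
  by (induction A rule: infinite_finite_induct) (simp_all add: bracket_add_right)

lemma bracket_span_closed:
  assumes M: "subspace M" and gen: "\<And>a b. a \<in> G1 \<Longrightarrow> b \<in> G2 \<Longrightarrow> br a b \<in> M"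
    and x: "x \<in> span G1" and y: "y \<in> span G2"
  shows "br x y \<in> M"
proof -
  have "subspace {x. br x b \<in> M}" for b
    using M by (simp add: subspace_def bracket_add_left bracket_scale_left)
  then have left: "br x' b \<in> M" if "x' \<in> span G1" "b \<in> G2" for x' b
    using span_minimal[of G1 "{x. br x b \<in> M}"] gen that by blast
  have "subspace {y. br x y \<in> M}"
    using M by (simp add: subspace_def bracket_add_right bracket_scale_right)
  then show ?thesis
    using span_minimal[of G2 "{y. br x y \<in> M}"] left[OF x] y by blast
qed

lemma lie_ideal_bracket_left:
  assumes "lie_ideal smul br L I" "x \<in> L" "y \<in> I"
  shows "br y x \<in> I"
  using assms bracket_anticommute[of y x] subspace_neg unfolding lie_ideal_def by metis

lemma simple_lie_center_trivial:
  assumes simple: "simple_lie smul br S" and s: "s \<in> S" and central: "\<And>x. x \<in> S \<Longrightarrow> br x s = 0"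
  shows "s = 0"
proof -
  define C where "C = {c \<in> S. \<forall>x\<in>S. br x c = 0}"
  have S: "subspace S"
    using simple unfolding simple_lie_def lie_subalgebra_def by blast
  have "subspace C"
    using S unfolding C_def subspace_def by (simp add: bracket_add_right bracket_scale_right)
  then have "lie_ideal smul br S C"
    unfolding lie_ideal_def C_def using subspace_0 by auto
  moreover have "C \<noteq> S"
    using simple unfolding simple_lie_def C_def by blast
  ultimately have "C = {0}"
    using simple unfolding simple_lie_def by blast
  then show ?thesis
    using s central unfolding C_def by blast
qed

context
  fixes L S Z :: "'a set"
  assumes L: "lie_subalgebra smul br L"
    and S_ideal: "lie_ideal smul br L S" and S_simple: "simple_lie smul br S"
    and Z: "subspace Z" "Z \<subseteq> L" and Z_central: "\<And>x z. x \<in> L \<Longrightarrow> z \<in> Z \<Longrightarrow> br x z = 0"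
    and L_sum: "L = {s + z |s z. s \<in> S \<and> z \<in> Z}"
begin

private lemma L_subspace: "subspace L"
  using L unfolding lie_subalgebra_def by blast

private lemma S_subspace: "subspace S" and S_subset: "S \<subseteq> L"
  using S_ideal unfolding lie_ideal_def by blast+

lemma ideal_contains_or_avoids_simple:
  assumes I: "lie_ideal smul br L I"
  shows "S \<subseteq> I \<or> S \<inter> I = {0}"
proof -
  have "lie_ideal smul br S (S \<inter> I)"
    using I S_ideal S_subset subspace_inter unfolding lie_ideal_def by blast
  then show ?thesis
    using S_simple unfolding simple_lie_def by blast
qed

lemma ideal_complement_if_contains_simple:
  assumes I: "lie_ideal smul br L I" and SI: "S \<subseteq> I"
  shows "\<exists>J. lie_ideal smul br L J \<and> I \<inter> J = {0} \<and> L = {x + y |x y. x \<in> I \<and> y \<in> J}"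
proof -
  have I_sub: "subspace I" "I \<subseteq> L"
    using I unfolding lie_ideal_def by blast+
  obtain C where C: "subspace C" "C \<subseteq> Z" "(I \<inter> Z) \<inter> C = {0}"
    "Z = {u + c |u c. u \<in> I \<inter> Z \<and> c \<in> C}"
    using subspace_complement[OF subspace_inter[OF I_sub(1) Z(1)] Z(1)] by blast
  have "lie_ideal smul br L C"
    unfolding lie_ideal_def using C(1,2) Z Z_central subspace_0 by auto
  moreover have "I \<inter> C = {0}"
    using C(2,3) by blast
  moreover have "L \<subseteq> {x + y |x y. x \<in> I \<and> y \<in> C}"
  proof
    fix l assume "l \<in> L"
    then obtain s z where "s \<in> S" "z \<in> Z" "l = s + z"
      using L_sum by blast
    moreover obtain i c where "i \<in> I" "c \<in> C" "z = i + c"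
      using C(4) \<open>z \<in> Z\<close> by blast
    ultimately have "l = (s + i) + c" "s + i \<in> I"
      using SI I_sub(1) subspace_add by (auto simp: add.assoc)
    then show "l \<in> {x + y |x y. x \<in> I \<and> y \<in> C}"
      using \<open>c \<in> C\<close> by blast
  qed
  moreover have "{x + y |x y. x \<in> I \<and> y \<in> C} \<subseteq> L"
    using I_sub(2) C(2) Z(2) L_subspace subspace_add by blast
  ultimately show ?thesis
    by blast
qed

lemma ideal_central_if_avoids_simple:
  assumes I: "lie_ideal smul br L I" and SI: "S \<inter> I = {0}"
  shows "I \<subseteq> Z"
proof
  fix x assume x: "x \<in> I"
  then obtain s z where sz: "s \<in> S" "z \<in> Z" "x = s + z"
    using I L_sum unfolding lie_ideal_def by blast
  have "br y s = 0" if y: "y \<in> S" for y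
  proof -
    have "br y z = 0"
      using Z_central[of y z] sz(2) y S_subset by blast
    then have "br y s = br y x"
      using sz(3) by (simp add: bracket_add_right)
    moreover have "br y x \<in> I" "br y s \<in> S"
      using I x y sz(1) S_ideal S_subset unfolding lie_ideal_def by blast+
    ultimately have "br y s \<in> S \<inter> I"
      by simp
    then show ?thesis
      using SI by simp
  qed
  then have "s = 0"
    using simple_lie_center_trivial[OF S_simple sz(1)] by blast
  then show "x \<in> Z"
    using sz by simp
qed

lemma ideal_simple_plus_central:
  assumes C: "subspace C" "C \<subseteq> Z"
  shows "lie_ideal smul br L {s + c |s c. s \<in> S \<and> c \<in> C}"
  unfolding lie_ideal_def
proof (intro conjI ballI)
  show "subspace {s + c |s c. s \<in> S \<and> c \<in> C}"
    using subspace_sums[OF S_subspace C(1)] .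
  show "{s + c |s c. s \<in> S \<and> c \<in> C} \<subseteq> L"
    using S_subset C(2) Z(2) L_subspace subspace_add by blast
  fix x y assume x: "x \<in> L" and "y \<in> {s + c |s c. s \<in> S \<and> c \<in> C}"
  then obtain s c where sc: "s \<in> S" "c \<in> C" "y = s + c"
    by blast
  then have "br x y = br x s + 0" "br x s \<in> S"
    using x C(2) Z_central S_ideal by (auto simp: bracket_add_right lie_ideal_def)
  then show "br x y \<in> {s + c |s c. s \<in> S \<and> c \<in> C}"
    using C(1) subspace_0 by blast
qed

lemma ideal_complement_if_avoids_simple:
  assumes I: "lie_ideal smul br L I" and SI: "S \<inter> I = {0}"
  shows "\<exists>J. lie_ideal smul br L J \<and> I \<inter> J = {0} \<and> L = {x + y |x y. x \<in> I \<and> y \<in> J}"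
proof -
  have I_sub: "subspace I" "I \<subseteq> Z"
    using I ideal_central_if_avoids_simple[OF I SI] unfolding lie_ideal_def by blast+
  obtain C where C: "subspace C" "C \<subseteq> Z" "I \<inter> C = {0}" "Z = {u + c |u c. u \<in> I \<and> c \<in> C}"
    using subspace_complement[OF I_sub(1) Z(1) I_sub(2)] by blast
  define J where "J = {s + c |s c. s \<in> S \<and> c \<in> C}"
  have J: "lie_ideal smul br L J"
    unfolding J_def using ideal_simple_plus_central[OF C(1,2)] .
  have "x = 0" if "x \<in> I" "x \<in> J" for x
  proof -
    obtain s c where sc: "s \<in> S" "c \<in> C" "x = s + c"
      using \<open>x \<in> J\<close> unfolding J_def by blast
    have "s \<in> Z"
      using sc I_sub(2) \<open>x \<in> I\<close> C(2) Z(1) subspace_diff[of Z x c] by auto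
    then have "s = 0"
      using simple_lie_center_trivial[OF S_simple sc(1)] Z_central S_subset by blast
    then show "x = 0"
      using sc C(3) \<open>x \<in> I\<close> by auto
  qed
  then have "I \<inter> J = {0}"
    using I J subspace_0 unfolding lie_ideal_def by blast
  moreover have "L \<subseteq> {x + y |x y. x \<in> I \<and> y \<in> J}"
  proof
    fix l assume "l \<in> L"
    then obtain s z where "s \<in> S" "z \<in> Z" "l = s + z"
      using L_sum by blast
    moreover obtain i c where "i \<in> I" "c \<in> C" "z = i + c"
      using C(4) \<open>z \<in> Z\<close> by blast
    ultimately have "l = i + (s + c)" "s + c \<in> J"
      unfolding J_def by (simp add: algebra_simps, blast)
    then show "l \<in> {x + y |x y. x \<in> I \<and> y \<in> J}"
      using \<open>i \<in> I\<close> by blast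
  qed
  moreover have "{x + y |x y. x \<in> I \<and> y \<in> J} \<subseteq> L"
    using I J L_subspace subspace_add unfolding lie_ideal_def by blast
  ultimately show ?thesis
    using J by blast
qed

lemma reductive_if_simple_ideal_plus_center: "reductive_lie smul br L"
  unfolding reductive_lie_def
proof (intro conjI allI impI)
  fix I assume I: "lie_ideal smul br L I"
  then show "\<exists>J. lie_ideal smul br L J \<and> I \<inter> J = {0} \<and> L = {x + y |x y. x \<in> I \<and> y \<in> J}"
    using ideal_contains_or_avoids_simple[OF I] ideal_complement_if_contains_simple[OF I]
      ideal_complement_if_avoids_simple[OF I] by blast
qed (fact L)

end

end

locale extended_affine =
  fixes smul :: "complex \<Rightarrow> 'a::ab_group_add \<Rightarrow> 'a"
    and br :: "'a \<Rightarrow> 'a \<Rightarrow> 'a"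
    and B :: "'a \<Rightarrow> 'a \<Rightarrow> complex"
    and H :: "'a set"
  assumes eala: "eala smul br B H"
begin

lemma lie_algebra: "lie_algebra smul br"
  using eala unfolding eala_def by (elim conjE)

lemma form_linear [rule_format]: "\<forall>a b x y z. B (smul a x + smul b y) z = a * B x z + b * B y z"
  using eala unfolding eala_def by (elim conjE)

lemma form_symmetric [rule_format]: "\<forall>x y. B x y = B y x"
  using eala unfolding eala_def by (elim conjE)

lemma form_nondegenerate [rule_format]: "\<forall>x. (\<forall>y. B x y = 0) \<longrightarrow> x = 0"
  using eala unfolding eala_def by (elim conjE)

lemma form_invariant [rule_format]: "\<forall>x y z. B (br x y) z = B x (br y z)"
  using eala unfolding eala_def by (elim conjE)

lemma H_subalgebra: "lie_subalgebra smul br H"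
  using eala unfolding eala_def by (elim conjE)

lemma H_finite_dim: "fin_dim smul H"
  using eala unfolding eala_def by (elim conjE)

lemma root_decomposition [rule_format]:
  "\<forall>x. \<exists>F c. finite F \<and> (\<forall>\<alpha>\<in>F. lin_functional smul H \<alpha> \<and> c \<alpha> \<in> root_space smul br H \<alpha>)
    \<and> x = sum c F"
  using eala unfolding eala_def by (elim conjE)

lemma root_spaces_independent [rule_format]:
  "\<forall>F c. finite F \<and> (\<forall>\<alpha>\<in>F. lin_functional smul H \<alpha> \<and> c \<alpha> \<in> root_space smul br H \<alpha>)
    \<and> sum c F = 0 \<longrightarrow> (\<forall>\<alpha>\<in>F. c \<alpha> = 0)"
  using eala unfolding eala_def by (elim conjE)

lemma root_space_zero: "root_space smul br H (\<lambda>_. 0) = H"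
  using eala unfolding eala_def by (elim conjE)

lemma ad_locally_nilpotent [rule_format]:
  "\<forall>\<alpha>\<in>aniso B H (roots smul br H). \<forall>x\<in>root_space smul br H \<alpha>. \<forall>y. \<exists>n. (br x ^^ n) y = 0"
  using eala unfolding eala_def by (elim conjE)

sublocale vector_space smul
  using lie_algebra unfolding lie_algebra_def by blast

sublocale symmetric_form smul B
  by unfold_locales (use form_linear[of 1 _ 1] form_linear[of _ _ 0] form_symmetric in simp_all)

lemma
  shows bracket_linear_left: "br (smul a x + smul b y) z = smul a (br x z) + smul b (br y z)"
    and bracket_self: "br x x = 0"
    and jacobi: "br x (br y z) + br y (br z x) + br z (br x y) = 0"
  using lie_algebra unfolding lie_algebra_def by blast+

text \<open>Linearity of the bracket in its second argument is not part of the definition of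
  \<^const>\<open>lie_algebra\<close>; it follows from the invariance and non-degeneracy of the form.\<close>

lemma eq_if_form_eq: "(\<And>w. B u w = B v w) \<Longrightarrow> u = v"
  using form_nondegenerate[of "u - v"] by (simp add: form_diff_left)

lemma bracket_linear_right: "br x (smul a y + smul b z) = smul a (br x y) + smul b (br x z)"
  by (rule eq_if_form_eq)
    (simp add: form_invariant form_add_left form_add_right form_scale_left form_scale_right bracket_linear_left)

sublocale complex_lie_algebra smul br
proof
  have add_right: "br x (y + z) = br x y + br x z" for x y z
    using bracket_linear_right[of x 1 y 1 z] by simp
  show anticommute: "br x y = - br y x" for x y
  proof -
    have "0 = br (x + y) (x + y)"
      by (simp only: bracket_self)
    also have "\<dots> = br x (x + y) + br y (x + y)"
      using bracket_linear_left[of 1 x 1 y "x + y"] by simp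
    also have "\<dots> = br x y + br y x"
      by (simp add: add_right bracket_self)
    finally show ?thesis
      using eq_neg_iff_add_eq_0 by metis
  qed
  show "br x (br y z) = br (br x y) z + br y (br x z)" for x y z
  proof -
    have yzx: "br y (br z x) = - br y (br x z)"
      using anticommute[of z x] bracket_linear_right[of y "-1" "br x z" 0] by simp
    have zxy: "br z (br x y) = - br (br x y) z"
      by (rule anticommute)
    have "br x (br y z) = - (br y (br z x) + br z (br x y))"
      using jacobi[of x y z] eq_neg_iff_add_eq_0[of "br x (br y z)" "br y (br z x) + br z (br x y)"]
      by (simp add: add.assoc)
    then show ?thesis
      unfolding yzx zxy by (simp add: add.commute)
  qed
qed (use bracket_linear_left[of 1 _ 1] bracket_linear_left[of _ _ 0] in simp_all)

abbreviation E :: "('a \<Rightarrow> complex) \<Rightarrow> 'a set" where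
  "E \<alpha> \<equiv> root_space smul br H \<alpha>"

abbreviation R :: "('a \<Rightarrow> complex) set" where
  "R \<equiv> roots smul br H"

abbreviation tv :: "('a \<Rightarrow> complex) \<Rightarrow> 'a" where
  "tv \<alpha> \<equiv> tvec B H \<alpha>"

abbreviation zero_root :: "'a \<Rightarrow> complex" where
  "zero_root \<equiv> (\<lambda>_. 0)"

lemma double_eq_zero_iff [simp]: "(x::'a) + x = 0 \<longleftrightarrow> x = 0"
proof
  assume "x + x = 0"
  then have "smul (1 / 2) (smul 2 x) = 0"
    using scale_left_distrib[of 1 1 x] by simp
  then show "x = 0"
    by simp
qed simp

lemma bracket_root_vector: "h \<in> H \<Longrightarrow> x \<in> E \<alpha> \<Longrightarrow> br h x = smul (\<alpha> h) x"
  by (simp add: root_space_def)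

lemma root_space_subspace: "subspace (E \<alpha>)"
  unfolding subspace_def root_space_def
  by (simp add: bracket_add_right bracket_scale_right scale_right_distrib mult.commute)

lemma H_subspace: "subspace H"
  using H_subalgebra unfolding lie_subalgebra_def by blast

lemma bracket_H_H: "h \<in> H \<Longrightarrow> k \<in> H \<Longrightarrow> br h k = 0"
  using bracket_root_vector[of h k zero_root] root_space_zero by simp

lemma bracket_root_spaces:
  assumes "x \<in> E \<alpha>" "y \<in> E \<beta>"
  shows "br x y \<in> E (\<lambda>h. \<alpha> h + \<beta> h)"
  using assms
  by (simp add: root_space_def bracket_leibniz bracket_scale_left bracket_scale_right scale_left_distrib)

lemma form_root_spaces_orthogonal:
  assumes "x \<in> E \<alpha>" "y \<in> E \<beta>" "h \<in> H" "\<alpha> h + \<beta> h \<noteq> 0"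
  shows "B x y = 0"
proof -
  have "\<alpha> h * B x y = B (br h x) y"
    using assms(1,3) by (simp add: bracket_root_vector form_scale_left)
  also have "\<dots> = - B (br x h) y"
    using bracket_anticommute[of h x] by (simp add: form_neg_left)
  also have "\<dots> = - (\<beta> h * B x y)"
    using assms(2,3) by (simp add: form_invariant bracket_root_vector form_scale_right)
  finally have "(\<alpha> h + \<beta> h) * B x y = 0"
    by (simp add: algebra_simps)
  then show ?thesis
    using assms(4) by simp
qed

lemma lin_functional_add: "lin_functional smul H \<alpha> \<Longrightarrow> x \<in> H \<Longrightarrow> y \<in> H \<Longrightarrow> \<alpha> (x + y) = \<alpha> x + \<alpha> y"
  unfolding lin_functional_def by (metis scale_one mult_1)

lemma lin_functional_scale: "lin_functional smul H \<alpha> \<Longrightarrow> x \<in> H \<Longrightarrow> \<alpha> (smul c x) = c * \<alpha> x"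
  unfolding lin_functional_def by (metis add.right_neutral mult_zero_left scale_zero_left)

lemma lin_functional_outside: "lin_functional smul H \<alpha> \<Longrightarrow> x \<notin> H \<Longrightarrow> \<alpha> x = 0"
  unfolding lin_functional_def by blast

lemma lin_functional_zero: "lin_functional smul H \<alpha> \<Longrightarrow> \<alpha> 0 = 0"
  using lin_functional_scale[of \<alpha> 0 0] subspace_0[OF H_subspace] by simp

lemma lin_functional_diff:
  "lin_functional smul H \<alpha> \<Longrightarrow> x \<in> H \<Longrightarrow> y \<in> H \<Longrightarrow> \<alpha> (x - y) = \<alpha> x - \<alpha> y"
  using lin_functional_add[of \<alpha> "x - y" y] H_subspace subspace_diff by fastforce

lemma lin_functional_eqI:
  assumes "lin_functional smul H \<alpha>" "lin_functional smul H \<beta>" "\<And>h. h \<in> H \<Longrightarrow> \<alpha> h = \<beta> h"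
  shows "\<alpha> = \<beta>"
proof
  show "\<alpha> h = \<beta> h" for h
    using assms lin_functional_outside[of \<alpha> h] lin_functional_outside[of \<beta> h]
    by (cases "h \<in> H") simp_all
qed

lemma lin_functional_plus:
  "lin_functional smul H \<alpha> \<Longrightarrow> lin_functional smul H \<beta> \<Longrightarrow> lin_functional smul H (\<lambda>h. \<alpha> h + \<beta> h)"
  unfolding lin_functional_def by (simp add: algebra_simps)

lemma lin_functional_neg: "lin_functional smul H \<alpha> \<Longrightarrow> lin_functional smul H (\<lambda>h. - \<alpha> h)"
  unfolding lin_functional_def by (simp add: algebra_simps)

lemma lin_functional_restrict:
  assumes \<alpha>: "lin_functional smul H \<alpha>" and K: "subspace K" "K \<subseteq> H"
  shows "lin_functional smul K (restrict_fun \<alpha> K)"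
  unfolding lin_functional_def restrict_fun_def
proof (intro conjI ballI allI impI)
  fix x y a b assume xy: "x \<in> K" "y \<in> K"
  have "smul a x + smul b y \<in> K"
    using xy K(1) subspace_add subspace_scale by blast
  moreover have "\<alpha> (smul a x + smul b y) = a * \<alpha> x + b * \<alpha> y"
    using \<alpha> xy K(2) unfolding lin_functional_def by blast
  ultimately show "(if smul a x + smul b y \<in> K then \<alpha> (smul a x + smul b y) else 0)
      = a * (if x \<in> K then \<alpha> x else 0) + b * (if y \<in> K then \<alpha> y else 0)"
    using xy by simp
qed simp

lemma roots_iff: "\<alpha> \<in> R \<longleftrightarrow> lin_functional smul H \<alpha> \<and> (\<exists>x\<in>E \<alpha>. x \<noteq> 0)"
proof -
  have "E \<alpha> \<inter> UNIV \<noteq> {0} \<longleftrightarrow> (\<exists>x\<in>E \<alpha>. x \<noteq> 0)"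
    using subspace_0[OF root_space_subspace[of \<alpha>]] by auto
  then show ?thesis
    by (simp add: roots_in_def)
qed

lemma form_nondegenerate_on_H:
  assumes h: "h \<in> H" and orth: "\<And>k. k \<in> H \<Longrightarrow> B h k = 0"
  shows "h = 0"
proof (rule form_nondegenerate)
  fix y
  obtain F c where F: "finite F" "\<forall>\<beta>\<in>F. lin_functional smul H \<beta> \<and> c \<beta> \<in> E \<beta>" "y = sum c F"
    using root_decomposition[of y] by blast
  have "B h (c \<beta>) = 0" if "\<beta> \<in> F" for \<beta>
  proof (cases "\<beta> = zero_root")
    case True
    then show ?thesis
      using F(2) that orth root_space_zero by auto
  next
    case False
    then obtain k where "\<beta> k \<noteq> 0"
      by blast
    moreover have "k \<in> H"
      using calculation F(2) that lin_functional_outside by blast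
    ultimately show ?thesis
      using form_root_spaces_orthogonal[of h zero_root "c \<beta>" \<beta> k] F(2) that h root_space_zero by auto
  qed
  then show "B h y = 0"
    using F(3) by (simp add: form_sum_right)
qed

lemma root_space_pairing:
  assumes "lin_functional smul H \<alpha>" "x \<in> E \<alpha>" "x \<noteq> 0"
  shows "\<exists>y\<in>E (\<lambda>h. - \<alpha> h). B x y \<noteq> 0"
proof -
  obtain z where "B x z \<noteq> 0"
    using form_nondegenerate assms(3) by blast
  moreover obtain F c where F: "finite F" "\<forall>\<beta>\<in>F. lin_functional smul H \<beta> \<and> c \<beta> \<in> E \<beta>" "z = sum c F"
    using root_decomposition[of z] by blast
  ultimately obtain \<beta> where \<beta>: "\<beta> \<in> F" "B x (c \<beta>) \<noteq> 0"
    using sum.neutral by (force simp: form_sum_right)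
  have "\<beta> h = - \<alpha> h" if "h \<in> H" for h
    using form_root_spaces_orthogonal[OF assms(2) _ that] F(2) \<beta> by (fastforce simp: add_eq_0_iff2)
  then have "\<beta> = (\<lambda>h. - \<alpha> h)"
    using lin_functional_eqI[OF _ lin_functional_neg[OF assms(1)]] F(2) \<beta>(1) by blast
  then show ?thesis
    using F(2) \<beta> by auto
qed

text \<open>\<^const>\<open>tvec\<close> is defined by a definite description, so \<open>tv \<alpha>\<close> is meaningful only for
  functionals \<open>\<alpha>\<close> that are represented by some vector of \<open>H\<close>.\<close>

definition representable :: "('a \<Rightarrow> complex) \<Rightarrow> bool" where
  "representable \<alpha> \<longleftrightarrow> (\<exists>t\<in>H. \<forall>h\<in>H. \<alpha> h = B h t)"

lemma tvec_eqI:
  assumes "t \<in> H" "\<And>h. h \<in> H \<Longrightarrow> \<alpha> h = B h t"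
  shows "tv \<alpha> = t"
  unfolding tvec_def
proof (rule the_equality)
  fix t' assume t': "t' \<in> H \<and> (\<forall>h\<in>H. \<alpha> h = B h t')"
  have "t' - t = 0"
    using t' assms H_subspace subspace_diff
    by (intro form_nondegenerate_on_H) (auto simp: form_diff_left form_symmetric[of _ t] form_symmetric[of _ t'])
  then show "t' = t"
    by simp
qed (use assms in blast)

lemma
  assumes "representable \<alpha>"
  shows tvec_mem: "tv \<alpha> \<in> H"
    and tvec_represents: "h \<in> H \<Longrightarrow> \<alpha> h = B h (tv \<alpha>)"
  using assms tvec_eqI unfolding representable_def by auto

lemma representable_root:
  assumes "\<alpha> \<in> R"
  shows "representable \<alpha>"
proof -
  obtain x where x: "x \<in> E \<alpha>" "x \<noteq> 0"
    using assms roots_iff by blast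
  then obtain y where y: "y \<in> E (\<lambda>h. - \<alpha> h)" "B x y \<noteq> 0"
    using root_space_pairing assms roots_iff by blast
  have "br x y \<in> H"
    using bracket_root_spaces[OF x(1) y(1)] root_space_zero by simp
  moreover have "\<alpha> h = B h (smul (1 / B x y) (br x y))" if "h \<in> H" for h
  proof -
    have "B h (br x y) = \<alpha> h * B x y"
      using that x(1) by (simp add: form_invariant[symmetric] bracket_root_vector form_scale_left)
    then show ?thesis
      using y(2) by (simp add: form_scale_right)
  qed
  ultimately show ?thesis
    unfolding representable_def using H_subspace subspace_scale by blast
qed

lemma tvec_add:
  assumes "representable \<alpha>" "representable \<beta>"
  shows "tv (\<lambda>h. \<alpha> h + \<beta> h) = tv \<alpha> + tv \<beta>"
proof -
  have "tv \<alpha> + tv \<beta> \<in> H" "\<And>h. h \<in> H \<Longrightarrow> \<alpha> h + \<beta> h = B h (tv \<alpha> + tv \<beta>)"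
    using assms tvec_mem tvec_represents H_subspace subspace_add by (auto simp: form_add_right)
  then show ?thesis
    by (rule tvec_eqI)
qed

lemma
  assumes "representable \<alpha>"
  shows representable_scale: "representable (\<lambda>h. c * \<alpha> h)"
    and tvec_scale: "tv (\<lambda>h. c * \<alpha> h) = smul c (tv \<alpha>)"
proof -
  have "smul c (tv \<alpha>) \<in> H" "\<And>h. h \<in> H \<Longrightarrow> c * \<alpha> h = B h (smul c (tv \<alpha>))"
    using assms tvec_mem tvec_represents H_subspace subspace_scale by (auto simp: form_scale_right)
  then show "representable (\<lambda>h. c * \<alpha> h)" "tv (\<lambda>h. c * \<alpha> h) = smul c (tv \<alpha>)"
    unfolding representable_def by (blast, rule tvec_eqI)
qed

lemma
  assumes "representable \<alpha>"
  shows representable_neg: "representable (\<lambda>h. - \<alpha> h)"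
    and tvec_neg: "tv (\<lambda>h. - \<alpha> h) = - tv \<alpha>"
  using representable_scale[OF assms, of "-1"] tvec_scale[OF assms, of "-1"] by simp_all

lemma tvec_zero_root: "tv zero_root = 0"
  using tvec_eqI[of 0 zero_root] subspace_0[OF H_subspace] by simp

lemma rform_eval: "representable \<alpha> \<Longrightarrow> representable \<beta> \<Longrightarrow> rform B H \<alpha> \<beta> = \<alpha> (tv \<beta>)"
  unfolding rform_def using tvec_represents tvec_mem form_symmetric by metis

lemma rform_commute: "rform B H \<alpha> \<beta> = rform B H \<beta> \<alpha>"
  unfolding rform_def by (rule form_symmetric)

lemma bracket_opposite_root_vectors:
  assumes "\<alpha> \<in> R" "x \<in> E \<alpha>" "y \<in> E (\<lambda>h. - \<alpha> h)"
  shows "br x y = smul (B x y) (tv \<alpha>)"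
proof -
  have rep: "representable \<alpha>"
    using representable_root[OF assms(1)] .
  have "br x y \<in> H"
    using bracket_root_spaces[OF assms(2,3)] root_space_zero by simp
  moreover have "\<alpha> h * B x y = B h (br x y)" if "h \<in> H" for h
    using form_invariant[of h x y] assms(2) that by (simp add: bracket_root_vector form_scale_left)
  ultimately have "tv (\<lambda>h. B x y * \<alpha> h) = br x y"
    by (intro tvec_eqI) (simp_all add: mult.commute)
  then show ?thesis
    using tvec_scale[OF rep] by simp
qed

text \<open>Induction on \<open>A\<close>: applying \<open>ad k - \<beta> k\<close>, for a \<open>k\<close> with \<open>\<alpha> k \<noteq> \<beta> k\<close>, kills the
  \<open>\<beta>\<close>-component and multiplies the \<open>\<alpha>\<close>-component by \<open>\<alpha> k - \<beta> k \<noteq> 0\<close>.\<close>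

lemma weight_components_mem:
  assumes K: "K \<subseteq> H" and I: "subspace I" and stable: "\<And>k y. k \<in> K \<Longrightarrow> y \<in> I \<Longrightarrow> br k y \<in> I"
    and "finite A" and "\<And>\<alpha> \<beta>. \<alpha> \<in> A \<Longrightarrow> \<beta> \<in> A \<Longrightarrow> \<alpha> \<noteq> \<beta> \<Longrightarrow> \<exists>k\<in>K. \<alpha> k \<noteq> \<beta> k"
    and "\<And>\<alpha>. \<alpha> \<in> A \<Longrightarrow> c \<alpha> \<in> E \<alpha>" and "sum c A \<in> I" and "\<alpha> \<in> A"
  shows "c \<alpha> \<in> I"
  using assms(4-8)
proof (induction A arbitrary: c rule: finite_psubset_induct)
  case (psubset A)
  show ?case
  proof (cases "A = {\<alpha>}")
    case True
    then show ?thesis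
      using psubset.prems(3) by simp
  next
    case False
    then obtain \<beta> where \<beta>: "\<beta> \<in> A" "\<beta> \<noteq> \<alpha>"
      using psubset.prems(4) by blast
    then obtain k where k: "k \<in> K" "\<alpha> k \<noteq> \<beta> k"
      using psubset.prems(1,4) by metis
    define c' where "c' \<gamma> = smul (\<gamma> k - \<beta> k) (c \<gamma>)" for \<gamma>
    have "sum c' (A - {\<beta>}) = sum c' A"
      using sum.remove[OF psubset.hyps(1) \<beta>(1), of c'] by (simp add: c'_def)
    also have "\<dots> = (\<Sum>\<gamma>\<in>A. br k (c \<gamma>) - smul (\<beta> k) (c \<gamma>))"
    proof (rule sum.cong)
      fix \<gamma> assume "\<gamma> \<in> A"
      then show "c' \<gamma> = br k (c \<gamma>) - smul (\<beta> k) (c \<gamma>)"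
        using bracket_root_vector[OF _ psubset.prems(2)] k(1) K by (auto simp: c'_def scale_left_diff_distrib)
    qed simp
    also have "\<dots> = br k (sum c A) - smul (\<beta> k) (sum c A)"
      by (simp add: sum_subtractf bracket_sum_right scale_sum_right)
    finally have "sum c' (A - {\<beta>}) \<in> I"
      using stable[OF k(1) psubset.prems(3)] psubset.prems(3) I subspace_diff subspace_scale by metis
    moreover have "c' \<gamma> \<in> E \<gamma>" if "\<gamma> \<in> A - {\<beta>}" for \<gamma>
      using psubset.prems(2) that subspace_scale[OF root_space_subspace] by (simp add: c'_def)
    ultimately have "c' \<alpha> \<in> I"
      using psubset.IH[of "A - {\<beta>}" c'] psubset.prems(1,4) \<beta> by blast
    then have "smul (1 / (\<alpha> k - \<beta> k)) (c' \<alpha>) \<in> I"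
      using I subspace_scale by blast
    then show ?thesis
      using k(2) by (simp add: c'_def)
  qed
qed

lemma ad_power_root_space:
  assumes "f \<in> E \<beta>" "v \<in> E \<gamma>"
  shows "(br f ^^ k) v \<in> E (\<lambda>h. \<gamma> h + of_nat k * \<beta> h)"
proof (induction k)
  case (Suc k)
  have "(\<lambda>h. \<beta> h + (\<gamma> h + of_nat k * \<beta> h)) = (\<lambda>h. \<gamma> h + of_nat (Suc k) * \<beta> h)"
    by (simp add: algebra_simps)
  then show ?case
    using bracket_root_spaces[OF assms(1) Suc] by simp
qed (use assms(2) in simp)

text \<open>The \<open>sl\<^sub>2\<close>-computation: with \<open>[e, f] = t\<close>, applying \<open>ad e\<close> to the string
  \<open>(ad f)\<^sup>k v\<close> of a vector \<open>v\<close> killed by \<open>ad e\<close> steps back down the string.\<close>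

lemma sl2_raising:
  assumes e: "e \<in> E \<alpha>" and f: "f \<in> E (\<lambda>h. - \<alpha> h)" and t: "br e f = t" "t \<in> H"
    and v: "v \<in> E (\<lambda>h. - \<alpha> h)" "br e v = 0"
  shows "br e ((br f ^^ Suc k) v) = smul (- \<alpha> t * of_nat (Suc k) * of_nat (Suc (Suc k)) / 2) ((br f ^^ k) v)"
proof (induction k)
  have step: "br e (br f w) = br t w + br f (br e w)" for w
    using bracket_leibniz[of e f w] t(1) by simp
  have weight: "br t ((br f ^^ k) v) = smul (- of_nat (Suc k) * \<alpha> t) ((br f ^^ k) v)" for k
    using ad_power_root_space[OF f v(1), of k] t(2) by (simp add: root_space_def algebra_simps)
  {
    case 0
    show ?case
      using step[of v] weight[of 0] v(2) by simp
  next
    case (Suc k)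
    have "br e ((br f ^^ Suc (Suc k)) v)
        = br t ((br f ^^ Suc k) v) + br f (br e ((br f ^^ Suc k) v))"
      using step by simp
    also have "\<dots> = smul (- of_nat (Suc (Suc k)) * \<alpha> t - \<alpha> t * of_nat (Suc k) * of_nat (Suc (Suc k)) / 2)
        ((br f ^^ Suc k) v)"
      using weight[of "Suc k"] Suc by (simp add: bracket_scale_right scale_left_diff_distrib)
    also have "- of_nat (Suc (Suc k)) * \<alpha> t - \<alpha> t * of_nat (Suc k) * of_nat (Suc (Suc k)) / 2
        = - \<alpha> t * of_nat (Suc (Suc k)) * of_nat (Suc (Suc (Suc k))) / 2"
      by (simp add: field_simps)
    finally show ?case .
  }
qed

lemma sl2_killed_vector_zero:
  assumes e: "e \<in> E \<alpha>" and f: "f \<in> E (\<lambda>h. - \<alpha> h)" and t: "br e f = t" "t \<in> H" "\<alpha> t \<noteq> 0"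
    and aniso: "(\<lambda>h. - \<alpha> h) \<in> aniso B H R"
    and v: "v \<in> E (\<lambda>h. - \<alpha> h)" "br e v = 0"
  shows "v = 0"
proof -
  have down: "(br f ^^ k) v = 0" if "(br f ^^ Suc k) v = 0" for k
    using sl2_raising[OF e f t(1,2) v, of k] that t(3) by (simp del: of_nat_Suc)
  obtain n where "(br f ^^ n) v = 0"
    using ad_locally_nilpotent[OF aniso f] by blast
  then show "v = 0"
    by (induction n) (use down in auto)
qed

lemma opposite_root_space_line:
  assumes \<alpha>: "\<alpha> \<in> R" and aniso: "(\<lambda>h. - \<alpha> h) \<in> aniso B H R"
  shows "\<exists>f. E (\<lambda>h. - \<alpha> h) \<subseteq> span {f}"
proof -
  obtain e where e: "e \<in> E \<alpha>" "e \<noteq> 0"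
    using \<alpha> roots_iff by blast
  obtain f0 where f0: "f0 \<in> E (\<lambda>h. - \<alpha> h)" "B e f0 \<noteq> 0"
    using root_space_pairing e \<alpha> roots_iff by blast
  define f where "f = smul (1 / B e f0) f0"
  have f: "f \<in> E (\<lambda>h. - \<alpha> h)" "B e f = 1"
    using f0 subspace_scale[OF root_space_subspace] by (auto simp: f_def form_scale_right)
  have rep: "representable \<alpha>"
    using representable_root[OF \<alpha>] .
  have "\<alpha> (- tv \<alpha>) = - \<alpha> (tv \<alpha>)"
    using lin_functional_scale[of \<alpha> "tv \<alpha>" "-1"] roots_iff \<alpha> tvec_mem[OF rep] by simp
  then have "rform B H (\<lambda>h. - \<alpha> h) (\<lambda>h. - \<alpha> h) = \<alpha> (tv \<alpha>)"
    using rform_eval[OF representable_neg[OF rep] representable_neg[OF rep]] by (simp add: tvec_neg[OF rep])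
  then have "\<alpha> (tv \<alpha>) \<noteq> 0"
    using aniso by (simp add: aniso_def)
  then have killed_zero: "v = 0" if "v \<in> E (\<lambda>h. - \<alpha> h)" "B e v = 0" for v
    using sl2_killed_vector_zero[OF e(1) f(1) _ tvec_mem[OF rep] _ aniso that(1)]
      bracket_opposite_root_vectors[OF \<alpha>] e(1) f that by simp
  have "v = smul (B e v) f" if v: "v \<in> E (\<lambda>h. - \<alpha> h)" for v
  proof -
    have "v - smul (B e v) f \<in> E (\<lambda>h. - \<alpha> h)" "B e (v - smul (B e v) f) = 0"
      using v f subspace_diff[OF root_space_subspace] subspace_scale[OF root_space_subspace]
      by (auto simp: form_diff_right form_scale_right)
    then show ?thesis
      using killed_zero by fastforce
  qed
  then have "E (\<lambda>h. - \<alpha> h) \<subseteq> span {f}"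
    using span_scale[OF span_base[of f "{f}"]] by (metis insertI1 subsetI)
  then show ?thesis ..
qed

end

lemma rspan_base: "\<alpha> \<in> S \<Longrightarrow> \<alpha> \<in> rspan S"
  unfolding rspan_def by (intro CollectI exI[of _ "{\<alpha>}"] exI[of _ "\<lambda>_. 1"]) simp

lemma rspan_real_combination:
  assumes "\<alpha> \<in> S" "\<beta> \<in> S"
  shows "(\<lambda>h. of_real r * \<alpha> h + \<beta> h) \<in> rspan S"
proof (cases "\<alpha> = \<beta>")
  case True
  then show ?thesis
    unfolding rspan_def using assms
    by (intro CollectI exI[of _ "{\<alpha>}"] exI[of _ "\<lambda>_. r + 1"]) (simp add: algebra_simps)
next
  case False
  then show ?thesis
    unfolding rspan_def using assms
    by (intro CollectI exI[of _ "{\<alpha>, \<beta>}"] exI[of _ "\<lambda>\<gamma>. if \<gamma> = \<alpha> then r else 1"]) simp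
qed

locale finite_closed_subsystem = extended_affine +
  fixes R' :: "('a \<Rightarrow> complex) set"
  assumes subsystem: "subsystem smul B H (roots smul br H) R'"
    and closed: "closed_sub (roots smul br H) R'"
    and finite_subsystem: "finite R'"
begin

lemma subsystem_roots: "R' \<subseteq> R"
  using subsystem unfolding subsystem_def by blast

lemma ears_subsystem: "ears smul B H R'"
  using subsystem unfolding subsystem_def by blast

lemma rform_real [rule_format]: "\<forall>v\<in>rspan R'. \<forall>w\<in>rspan R'. Im (rform B H v w) = 0"
  using ears_subsystem unfolding ears_def by (elim conjE)

lemma rform_psd [rule_format]: "\<forall>v\<in>rspan R'. Re (rform B H v v) \<ge> 0"
  using ears_subsystem unfolding ears_def by (elim conjE)

lemma zero_root_mem: "zero_root \<in> R'"
  using ears_subsystem unfolding ears_def by (elim conjE)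

lemma neg_root_mem [rule_format]: "\<forall>\<alpha>\<in>R'. (\<lambda>h. - \<alpha> h) \<in> R'"
  using ears_subsystem unfolding ears_def by (elim conjE)

lemma root_strings [rule_format]:
  "\<forall>\<alpha>\<in>aniso B H R'. \<forall>\<beta>\<in>R'. \<exists>d u :: nat.
     {k :: int. (\<lambda>h. \<beta> h + of_int k * \<alpha> h) \<in> R'} = {- int d .. int u} \<and>
     2 * rform B H \<beta> \<alpha> / rform B H \<alpha> \<alpha> = of_int (int d - int u)"
  using ears_subsystem unfolding ears_def by (elim conjE)

lemma subsystem_nonisolated: "nonisolated B H R'"
  using ears_subsystem unfolding ears_def by (elim conjE)

lemma subsystem_connected: "connected_roots B H R'"
  using ears_subsystem unfolding ears_def by (elim conjE)

lemma subsystem_representable: "\<alpha> \<in> R' \<Longrightarrow> representable \<alpha>"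
  using subsystem_roots representable_root by blast

lemma subsystem_lin_functional: "\<alpha> \<in> R' \<Longrightarrow> lin_functional smul H \<alpha>"
  using subsystem_roots roots_iff by blast

lemma root_string_reflection:
  assumes \<alpha>: "\<alpha> \<in> aniso B H R'" and \<beta>: "\<beta> \<in> R'"
  shows "(\<lambda>h. \<beta> h - 2 * rform B H \<beta> \<alpha> / rform B H \<alpha> \<alpha> * \<alpha> h) \<in> R'"
proof -
  obtain d u :: nat where du: "{k :: int. (\<lambda>h. \<beta> h + of_int k * \<alpha> h) \<in> R'} = {- int d .. int u}"
    "2 * rform B H \<beta> \<alpha> / rform B H \<alpha> \<alpha> = of_int (int d - int u)"
    using root_strings[OF \<alpha> \<beta>] by blast
  have "int u - int d \<in> {k :: int. (\<lambda>h. \<beta> h + of_int k * \<alpha> h) \<in> R'}"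
    unfolding du(1) by simp
  moreover have "2 * rform B H \<beta> \<alpha> / rform B H \<alpha> \<alpha> = - of_int (int u - int d)"
    using du(2) by simp
  ultimately show ?thesis
    by (simp only: mem_Collect_eq) (simp add: algebra_simps)
qed

text \<open>The function \<open>r \<mapsto> (r\<delta> + \<alpha>, r\<delta> + \<alpha>) = 2r(\<delta>, \<alpha>) + (\<alpha>, \<alpha>)\<close> on the reals is affine and,
  by positive semi-definiteness, bounded below; hence its slope vanishes.\<close>

lemma isotropic_root_orthogonal:
  assumes \<delta>: "\<delta> \<in> R'" "rform B H \<delta> \<delta> = 0" and \<alpha>: "\<alpha> \<in> R'"
  shows "rform B H \<delta> \<alpha> = 0"
proof -
  have rep: "representable \<delta>" "representable \<alpha>"
    using \<delta>(1) \<alpha> subsystem_representable by blast+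
  have expand: "rform B H (\<lambda>h. of_real r * \<delta> h + \<alpha> h) (\<lambda>h. of_real r * \<delta> h + \<alpha> h)
      = 2 * of_real r * rform B H \<delta> \<alpha> + rform B H \<alpha> \<alpha>" for r
    using \<delta>(2) rform_commute[of \<alpha> \<delta>]
    unfolding rform_def tvec_add[OF representable_scale[OF rep(1)] rep(2)] tvec_scale[OF rep(1)]
    by (simp add: form_add_left form_add_right form_scale_left form_scale_right rform_def algebra_simps)
  have psd: "2 * r * Re (rform B H \<delta> \<alpha>) + Re (rform B H \<alpha> \<alpha>) \<ge> 0" for r
    using rform_psd[OF rspan_real_combination[OF \<delta>(1) \<alpha>, of r]] expand[of r] by simp
  have "Re (rform B H \<delta> \<alpha>) = 0"
  proof (rule ccontr)
    assume "Re (rform B H \<delta> \<alpha>) \<noteq> 0"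
    then show False
      using psd[of "- (Re (rform B H \<alpha> \<alpha>) + 1) / (2 * Re (rform B H \<delta> \<alpha>))"] by (simp add: field_simps)
  qed
  moreover have "Im (rform B H \<delta> \<alpha>) = 0"
    using rform_real rspan_base \<delta>(1) \<alpha> by blast
  ultimately show ?thesis
    by (simp add: complex_eq_iff)
qed

text \<open>For isotropic \<open>\<delta>\<close> all roots \<open>\<alpha> + k\<delta>\<close> have the length of \<open>\<alpha>\<close>, and each is, up to sign,
  the reflection of its predecessor in its successor.\<close>

lemma isotropic_string_mem:
  assumes \<delta>: "\<delta> \<in> R'" "rform B H \<delta> \<delta> = 0"
    and \<alpha>: "\<alpha> \<in> aniso B H R'" "(\<lambda>h. \<alpha> h + \<delta> h) \<in> R'"
  shows "(\<lambda>h. \<alpha> h + of_nat k * \<delta> h) \<in> R'"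
proof -
  have \<alpha>R: "\<alpha> \<in> R'" "rform B H \<alpha> \<alpha> \<noteq> 0"
    using \<alpha>(1) by (simp_all add: aniso_def)
  have rep: "representable \<delta>" "representable \<alpha>"
    using \<delta>(1) \<alpha>R(1) subsystem_representable by blast+
  define g where "g k = (\<lambda>h. \<alpha> h + of_nat k * \<delta> h)" for k
  have tv_g: "tv (g k) = tv \<alpha> + smul (of_nat k) (tv \<delta>)" for k
    unfolding g_def using tvec_add[OF rep(2) representable_scale[OF rep(1)]] tvec_scale[OF rep(1)] by simp
  have "B (tv \<delta>) (tv \<delta>) = 0" "B (tv \<delta>) (tv \<alpha>) = 0" "B (tv \<alpha>) (tv \<delta>) = 0"
    using \<delta>(2) isotropic_root_orthogonal[OF \<delta> \<alpha>R(1)] rform_commute[of \<delta> \<alpha>] by (simp_all add: rform_def)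
  then have g_form: "rform B H (g i) (g j) = rform B H \<alpha> \<alpha>" for i j
    unfolding rform_def tv_g by (simp add: form_add_left form_add_right form_scale_left form_scale_right)
  have "g k \<in> R' \<and> g (Suc k) \<in> R'" for k
  proof (induction k)
    case 0
    then show ?case
      using \<alpha>R(1) \<alpha>(2) by (simp add: g_def)
  next
    case (Suc k)
    have "g (Suc k) \<in> aniso B H R'"
      using Suc g_form \<alpha>R(2) by (simp add: aniso_def)
    then have "(\<lambda>h. g k h - 2 * g (Suc k) h) \<in> R'"
      using root_string_reflection[of "g (Suc k)" "g k"] Suc g_form \<alpha>R(2) by simp
    then have "(\<lambda>h. - (g k h - 2 * g (Suc k) h)) \<in> R'"
      using neg_root_mem by blast
    moreover have "(\<lambda>h. - (g k h - 2 * g (Suc k) h)) = g (Suc (Suc k))"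
      by (simp add: g_def algebra_simps)
    ultimately show ?case
      using Suc by simp
  qed
  then show ?thesis
    unfolding g_def by blast
qed

lemma isotropic_root_zero:
  assumes \<delta>: "\<delta> \<in> R'" "rform B H \<delta> \<delta> = 0"
  shows "\<delta> = zero_root"
proof (rule ccontr)
  assume "\<delta> \<noteq> zero_root"
  then obtain h0 where h0: "\<delta> h0 \<noteq> 0"
    by blast
  have "\<delta> \<in> R' - aniso B H R'"
    using \<delta> by (simp add: aniso_def)
  then obtain \<alpha> where \<alpha>: "\<alpha> \<in> aniso B H R'" "(\<lambda>h. \<alpha> h + \<delta> h) \<in> aniso B H R'"
    using subsystem_nonisolated unfolding nonisolated_def by blast
  define g where "g k = (\<lambda>h. \<alpha> h + of_nat k * \<delta> h)" for k
  have "range g \<subseteq> R'"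
    using isotropic_string_mem[OF \<delta> \<alpha>(1)] \<alpha>(2) unfolding g_def aniso_def by blast
  moreover have "inj g"
    by (rule injI) (use h0 in \<open>simp add: g_def fun_eq_iff, metis\<close>)
  ultimately show False
    using finite_subsystem range_inj_infinite finite_subset by blast
qed

lemma aniso_subsystem: "aniso B H R' = R' - {zero_root}"
proof -
  have "rform B H zero_root zero_root = 0"
    by (simp add: rform_def tvec_zero_root)
  then show ?thesis
    using isotropic_root_zero unfolding aniso_def by blast
qed

lemma coroot_eval_nonzero:
  assumes "\<alpha> \<in> R' - {zero_root}"
  shows "\<alpha> (tv \<alpha>) \<noteq> 0"
proof -
  have "rform B H \<alpha> \<alpha> \<noteq> 0"
    using assms aniso_subsystem unfolding aniso_def by blast
  then show ?thesis
    using rform_eval subsystem_representable assms by simp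
qed

lemma nonzero_root_exists: "\<exists>\<alpha>. \<alpha> \<in> R' - {zero_root}"
  using subsystem_nonisolated zero_root_mem aniso_subsystem unfolding nonisolated_def by blast

lemma coroots_subset_H: "tv ` R' \<subseteq> H"
  using tvec_mem subsystem_representable by blast

definition reflection :: "('a \<Rightarrow> complex) \<Rightarrow> 'a \<Rightarrow> 'a" where
  "reflection \<alpha> x = x - smul (2 * \<alpha> x / rform B H \<alpha> \<alpha>) (tv \<alpha>)"

context
  fixes \<alpha> assumes \<alpha>: "\<alpha> \<in> R' - {zero_root}"
begin

private lemma reflection_root_facts:
  shows "representable \<alpha>" "lin_functional smul H \<alpha>" "tv \<alpha> \<in> H"
    and "\<alpha> (tv \<alpha>) = rform B H \<alpha> \<alpha>" "rform B H \<alpha> \<alpha> \<noteq> 0"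
proof -
  show rep: "representable \<alpha>"
    using \<alpha> subsystem_representable by blast
  show "lin_functional smul H \<alpha>"
    using \<alpha> subsystem_lin_functional by blast
  show "tv \<alpha> \<in> H"
    using tvec_mem[OF rep] .
  show "\<alpha> (tv \<alpha>) = rform B H \<alpha> \<alpha>"
    using rform_eval[OF rep rep] by simp
  show "rform B H \<alpha> \<alpha> \<noteq> 0"
    using \<alpha> aniso_subsystem unfolding aniso_def by blast
qed

lemma reflection_mem: "x \<in> H \<Longrightarrow> reflection \<alpha> x \<in> H"
  unfolding reflection_def using reflection_root_facts H_subspace subspace_diff subspace_scale by blast

lemma reflection_add: "x \<in> H \<Longrightarrow> y \<in> H \<Longrightarrow> reflection \<alpha> (x + y) = reflection \<alpha> x + reflection \<alpha> y"
  unfolding reflection_def using reflection_root_facts(2)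
  by (simp add: lin_functional_add add_divide_distrib algebra_simps)

lemma reflection_scale: "x \<in> H \<Longrightarrow> reflection \<alpha> (smul c x) = smul c (reflection \<alpha> x)"
  unfolding reflection_def using reflection_root_facts(2)
  by (simp add: lin_functional_scale scale_right_diff_distrib)

lemma reflection_coroot_self: "reflection \<alpha> (tv \<alpha>) = - tv \<alpha>"
proof -
  have "reflection \<alpha> (tv \<alpha>) = tv \<alpha> - smul 2 (tv \<alpha>)"
    unfolding reflection_def using reflection_root_facts(4,5) by simp
  also have "\<dots> = - tv \<alpha>"
    using scale_left_distrib[of 1 1 "tv \<alpha>"] by simp
  finally show ?thesis .
qed

lemma reflection_involutive:
  assumes x: "x \<in> H"
  shows "reflection \<alpha> (reflection \<alpha> x) = x"
proof -
  define c where "c = 2 * \<alpha> x / rform B H \<alpha> \<alpha>"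
  have rx: "reflection \<alpha> x = x - smul c (tv \<alpha>)"
    by (simp add: reflection_def c_def)
  have "\<alpha> (reflection \<alpha> x) = \<alpha> x - c * rform B H \<alpha> \<alpha>"
    using lin_functional_diff[OF reflection_root_facts(2) x] lin_functional_scale[OF reflection_root_facts(2)]
      reflection_root_facts(3,4) H_subspace subspace_scale rx by metis
  also have "\<dots> = - \<alpha> x"
    using reflection_root_facts(5) by (simp add: c_def)
  finally have "reflection \<alpha> (reflection \<alpha> x) = reflection \<alpha> x + smul c (tv \<alpha>)"
    by (simp add: reflection_def[of \<alpha> "reflection \<alpha> x"] c_def)
  then show ?thesis
    by (simp add: rx)
qed

lemma reflection_coroot:
  assumes \<gamma>: "\<gamma> \<in> R'"
  shows "reflection \<alpha> (tv \<gamma>) \<in> tv ` R'"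
proof -
  define c where "c = 2 * rform B H \<gamma> \<alpha> / rform B H \<alpha> \<alpha>"
  have "(\<lambda>h. \<gamma> h - c * \<alpha> h) \<in> R'"
    using root_string_reflection[of \<alpha> \<gamma>] \<alpha> \<gamma> aniso_subsystem unfolding c_def by simp
  moreover have "tv (\<lambda>h. \<gamma> h - c * \<alpha> h) = tv \<gamma> - smul c (tv \<alpha>)"
  proof -
    have eq: "(\<lambda>h. \<gamma> h - c * \<alpha> h) = (\<lambda>h. \<gamma> h + (- c) * \<alpha> h)"
      by simp
    show ?thesis
      unfolding eq tvec_add[OF subsystem_representable[OF \<gamma>] representable_scale[OF reflection_root_facts(1)]]
        tvec_scale[OF reflection_root_facts(1)]
      by simp
  qed
  moreover have "reflection \<alpha> (tv \<gamma>) = tv \<gamma> - smul c (tv \<alpha>)"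
  proof -
    have "\<alpha> (tv \<gamma>) = rform B H \<gamma> \<alpha>"
      using rform_eval[OF reflection_root_facts(1) subsystem_representable[OF \<gamma>]] rform_commute by simp
    then show ?thesis
      by (simp add: reflection_def c_def)
  qed
  ultimately show ?thesis
    by (intro image_eqI[of _ tv "\<lambda>h. \<gamma> h - c * \<alpha> h"]) simp_all
qed

end

lemma reflection_fixes: "\<alpha> x = 0 \<Longrightarrow> reflection \<alpha> x = x"
  unfolding reflection_def by simp

lemma fold_reflection:
  assumes "ws \<in> lists (R' - {zero_root})"
  shows fold_reflection_add:
      "x \<in> H \<Longrightarrow> y \<in> H \<Longrightarrow> fold reflection ws (x + y) = fold reflection ws x + fold reflection ws y"
    and fold_reflection_scale: "x \<in> H \<Longrightarrow> fold reflection ws (smul c x) = smul c (fold reflection ws x)"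
    and fold_reflection_coroot: "x \<in> tv ` R' \<Longrightarrow> fold reflection ws x \<in> tv ` R'"
    and fold_reflection_fixes: "(\<And>\<beta>. \<beta> \<in> R' \<Longrightarrow> \<beta> x = 0) \<Longrightarrow> fold reflection ws x = x"
  using assms
proof (induction ws arbitrary: x y)
  case (Cons \<alpha> ws)
  { case 1 then show ?case using Cons reflection_mem reflection_add by simp }
  { case 2 then show ?case using Cons reflection_mem reflection_scale by simp }
  { case 3 then show ?case using Cons reflection_coroot by auto }
  { case 4 then show ?case using Cons reflection_fixes by simp }
qed simp_all

lemma fold_reflection_sum:
  assumes ws: "ws \<in> lists (R' - {zero_root})" and "finite A" "\<And>a. a \<in> A \<Longrightarrow> v a \<in> H"
  shows "fold reflection ws (\<Sum>a\<in>A. smul (c a) (v a)) = (\<Sum>a\<in>A. smul (c a) (fold reflection ws (v a)))"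
  using assms(2,3)
proof (induction A rule: finite_induct)
  case empty
  then show ?case
    using fold_reflection_scale[OF ws, of 0 0] subspace_0[OF H_subspace] by simp
next
  case (insert a A)
  have va: "v a \<in> H"
    using insert.prems by blast
  have sum_A: "(\<Sum>a\<in>A. smul (c a) (v a)) \<in> H"
    by (intro subspace_sum[OF H_subspace] subspace_scale[OF H_subspace]) (use insert.prems in blast)
  have IH: "fold reflection ws (\<Sum>a\<in>A. smul (c a) (v a)) = (\<Sum>a\<in>A. smul (c a) (fold reflection ws (v a)))"
    by (rule insert.IH) (use insert.prems in blast)
  have "fold reflection ws (\<Sum>a\<in>insert a A. smul (c a) (v a))
      = fold reflection ws (smul (c a) (v a) + (\<Sum>a\<in>A. smul (c a) (v a)))"
    using insert.hyps by simp
  also have "\<dots> = smul (c a) (fold reflection ws (v a)) + fold reflection ws (\<Sum>a\<in>A. smul (c a) (v a))"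
    using fold_reflection_add[OF ws subspace_scale[OF H_subspace va] sum_A] fold_reflection_scale[OF ws va]
    by simp
  also have "\<dots> = (\<Sum>a\<in>insert a A. smul (c a) (fold reflection ws (v a)))"
    using insert.hyps IH by simp
  finally show ?case .
qed

text \<open>The Weyl group of \<open>R'\<close>, represented by the permutations of the finite set of coroots
  induced by products of reflections.\<close>

definition weyl_perms :: "('a \<Rightarrow> 'a) set" where
  "weyl_perms = (\<lambda>ws. restrict (fold reflection ws) (tv ` R')) ` lists (R' - {zero_root})"

lemma weyl_permsE:
  assumes "\<sigma> \<in> weyl_perms"
  obtains ws where "ws \<in> lists (R' - {zero_root})" "\<And>x. x \<in> tv ` R' \<Longrightarrow> \<sigma> x = fold reflection ws x"
proof -
  obtain ws where "ws \<in> lists (R' - {zero_root})" "\<sigma> = restrict (fold reflection ws) (tv ` R')"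
    using assms unfolding weyl_perms_def by blast
  then show thesis
    using that[of ws] by simp
qed

lemma weyl_perms_extensional: "\<sigma> \<in> weyl_perms \<Longrightarrow> \<sigma> \<in> extensional (tv ` R')"
  unfolding weyl_perms_def by auto

lemma finite_weyl_perms: "finite weyl_perms"
proof (rule finite_subset)
  show "weyl_perms \<subseteq> Pi\<^sub>E (tv ` R') (\<lambda>_. tv ` R')"
  proof
    fix \<sigma> assume "\<sigma> \<in> weyl_perms"
    then obtain ws where ws: "ws \<in> lists (R' - {zero_root})" "\<sigma> = restrict (fold reflection ws) (tv ` R')"
      unfolding weyl_perms_def by blast
    then show "\<sigma> \<in> Pi\<^sub>E (tv ` R') (\<lambda>_. tv ` R')"
      using fold_reflection_coroot[OF ws(1)] by (simp add: restrict_PiE_iff)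
  qed
  show "finite (Pi\<^sub>E (tv ` R') (\<lambda>_. tv ` R'))"
    using finite_subsystem by (simp add: finite_PiE)
qed

lemma card_weyl_perms_pos: "card weyl_perms > 0"
proof -
  have "restrict (fold reflection []) (tv ` R') \<in> weyl_perms"
    unfolding weyl_perms_def by blast
  then show ?thesis
    using finite_weyl_perms card_gt_0_iff by blast
qed

lemma weyl_perm_neg:
  assumes \<sigma>: "\<sigma> \<in> weyl_perms" and \<gamma>: "\<gamma> \<in> R'"
  shows "\<sigma> (- tv \<gamma>) = - \<sigma> (tv \<gamma>)"
proof -
  obtain ws where ws: "ws \<in> lists (R' - {zero_root})" "\<And>x. x \<in> tv ` R' \<Longrightarrow> \<sigma> x = fold reflection ws x"
    using weyl_permsE[OF \<sigma>] by metis
  have "- tv \<gamma> \<in> tv ` R'"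
    using tvec_neg[OF subsystem_representable[OF \<gamma>]] neg_root_mem[OF \<gamma>] by (metis image_eqI)
  then have "\<sigma> (- tv \<gamma>) = fold reflection ws (smul (-1) (tv \<gamma>))"
    using ws(2) by simp
  also have "\<dots> = - \<sigma> (tv \<gamma>)"
    using fold_reflection_scale[OF ws(1) tvec_mem[OF subsystem_representable[OF \<gamma>]], of "-1"] ws(2) \<gamma>
    by simp
  finally show ?thesis .
qed

lemma weyl_perms_compose_reflection:
  assumes \<gamma>: "\<gamma> \<in> R' - {zero_root}" and \<sigma>: "\<sigma> \<in> weyl_perms"
  shows "restrict (\<lambda>x. \<sigma> (reflection \<gamma> x)) (tv ` R') \<in> weyl_perms"
proof -
  obtain ws where ws: "ws \<in> lists (R' - {zero_root})" "\<And>x. x \<in> tv ` R' \<Longrightarrow> \<sigma> x = fold reflection ws x"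
    using weyl_permsE[OF \<sigma>] by metis
  have "\<sigma> (reflection \<gamma> x) = fold reflection (\<gamma> # ws) x" if "x \<in> tv ` R'" for x
    using that ws(2) reflection_coroot[OF \<gamma>] by auto
  then have "restrict (\<lambda>x. \<sigma> (reflection \<gamma> x)) (tv ` R') = restrict (fold reflection (\<gamma> # ws)) (tv ` R')"
    by (rule restrict_ext)
  moreover have "\<gamma> # ws \<in> lists (R' - {zero_root})"
    using ws(1) \<gamma> by simp
  ultimately show ?thesis
    unfolding weyl_perms_def by blast
qed

text \<open>Averaging over the Weyl group: composing with the reflection \<open>s\<^sub>\<gamma>\<close> permutes the
  group and sends \<open>t\<^sub>\<gamma>\<close> to \<open>-t\<^sub>\<gamma>\<close>, so the orbit sum of \<open>t\<^sub>\<gamma>\<close> equals its own negative.\<close>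

lemma weyl_orbit_sum_zero:
  assumes \<gamma>: "\<gamma> \<in> R'"
  shows "(\<Sum>\<sigma>\<in>weyl_perms. \<sigma> (tv \<gamma>)) = 0"
proof (cases "\<gamma> = zero_root")
  case True
  have "\<sigma> 0 = - \<sigma> 0" if "\<sigma> \<in> weyl_perms" for \<sigma>
    using weyl_perm_neg[OF that zero_root_mem] tvec_zero_root by simp
  then have "\<sigma> 0 = 0" if "\<sigma> \<in> weyl_perms" for \<sigma>
    using that by (simp add: eq_neg_iff_add_eq_0)
  then show ?thesis
    using True tvec_zero_root by (simp add: sum.neutral)
next
  case False
  then have \<gamma>': "\<gamma> \<in> R' - {zero_root}"
    using \<gamma> by blast
  define \<phi> where "\<phi> \<sigma> = restrict (\<lambda>x. \<sigma> (reflection \<gamma> x)) (tv ` R')" for \<sigma> :: "'a \<Rightarrow> 'a"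
  have \<phi>_weyl: "\<phi> \<sigma> \<in> weyl_perms" if "\<sigma> \<in> weyl_perms" for \<sigma>
    unfolding \<phi>_def using weyl_perms_compose_reflection[OF \<gamma>' that] .
  have \<phi>_\<phi>: "\<phi> (\<phi> \<sigma>) = \<sigma>" if "\<sigma> \<in> weyl_perms" for \<sigma>
  proof (rule extensionalityI[of _ "tv ` R'"])
    show "\<phi> (\<phi> \<sigma>) \<in> extensional (tv ` R')" "\<sigma> \<in> extensional (tv ` R')"
      using weyl_perms_extensional[OF that] unfolding \<phi>_def by auto
    fix x assume x: "x \<in> tv ` R'"
    then have "reflection \<gamma> (reflection \<gamma> x) = x"
      using reflection_involutive[OF \<gamma>'] tvec_mem subsystem_representable by blast
    then show "\<phi> (\<phi> \<sigma>) x = \<sigma> x"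
      using x reflection_coroot[OF \<gamma>'] unfolding \<phi>_def by auto
  qed
  have "(\<Sum>\<sigma>\<in>weyl_perms. \<sigma> (tv \<gamma>)) = (\<Sum>\<sigma>\<in>weyl_perms. \<phi> \<sigma> (tv \<gamma>))"
    by (rule sum.reindex_bij_witness[of _ \<phi> \<phi>]) (simp_all add: \<phi>_weyl \<phi>_\<phi>)
  also have "\<dots> = (\<Sum>\<sigma>\<in>weyl_perms. - \<sigma> (tv \<gamma>))"
  proof (rule sum.cong)
    fix \<sigma> assume "\<sigma> \<in> weyl_perms"
    then show "\<phi> \<sigma> (tv \<gamma>) = - \<sigma> (tv \<gamma>)"
      using \<gamma> reflection_coroot_self[OF \<gamma>'] weyl_perm_neg unfolding \<phi>_def by simp
  qed simp
  finally show ?thesis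
    by (simp add: sum_negf eq_neg_iff_add_eq_0)
qed

lemma coroot_span_invariants_zero:
  assumes x: "x \<in> span (tv ` R')" and inv: "\<And>\<beta>. \<beta> \<in> R' \<Longrightarrow> \<beta> x = 0"
  shows "x = 0"
proof -
  have fin: "finite (tv ` R')"
    using finite_subsystem by simp
  have coroots_H: "v \<in> H" if "v \<in> tv ` R'" for v
    using that coroots_subset_H by blast
  have "x \<in> range (\<lambda>c. \<Sum>v\<in>tv ` R'. smul (c v) v)"
    using x span_finite[OF fin] by simp
  then obtain c where c: "x = (\<Sum>v\<in>tv ` R'. smul (c v) v)"
    by blast
  have orbit: "x = (\<Sum>v\<in>tv ` R'. smul (c v) (\<sigma> v))" if \<sigma>: "\<sigma> \<in> weyl_perms" for \<sigma>
  proof -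
    obtain ws where ws: "ws \<in> lists (R' - {zero_root})" "\<And>x. x \<in> tv ` R' \<Longrightarrow> \<sigma> x = fold reflection ws x"
      using weyl_permsE[OF \<sigma>] by metis
    have "x = fold reflection ws x"
      using fold_reflection_fixes[OF ws(1)] inv by simp
    also have "\<dots> = (\<Sum>v\<in>tv ` R'. smul (c v) (fold reflection ws v))"
      unfolding c using fold_reflection_sum[where v = "\<lambda>v. v", OF ws(1) fin coroots_H] .
    also have "\<dots> = (\<Sum>v\<in>tv ` R'. smul (c v) (\<sigma> v))"
      using ws(2) by simp
    finally show ?thesis .
  qed
  have "smul (of_nat (card weyl_perms)) x = (\<Sum>\<sigma>\<in>weyl_perms. x)"
    by (simp add: sum_constant_scale)
  also have "\<dots> = (\<Sum>\<sigma>\<in>weyl_perms. \<Sum>v\<in>tv ` R'. smul (c v) (\<sigma> v))"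
    using orbit by (rule sum.cong[OF refl])
  also have "\<dots> = (\<Sum>v\<in>tv ` R'. smul (c v) (\<Sum>\<sigma>\<in>weyl_perms. \<sigma> v))"
    unfolding scale_sum_right by (rule sum.swap)
  also have "\<dots> = 0"
    using weyl_orbit_sum_zero by (intro sum.neutral) auto
  finally show ?thesis
    using card_weyl_perms_pos by simp
qed
abbreviation L :: "'a set \<Rightarrow> 'a set" where
  "L K \<equiv> lie_cover smul br H R' K"

abbreviation T :: "'a set" where
  "T \<equiv> hsub smul B H R'"

lemma root_vectors_subset_lie_cover:
  assumes "\<alpha> \<in> R' - {zero_root}"
  shows "E \<alpha> \<subseteq> L K"
proof -
  have "E \<alpha> \<subseteq> K \<union> (\<Union>\<beta>\<in>R' - {zero_root}. E \<beta>)"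
    using assms by blast
  then show ?thesis
    unfolding lie_cover_def using span_superset by (rule order_trans)
qed

lemma hsub_subspace: "subspace T"
  unfolding hsub_def by simp

lemma hsub_subset_H: "T \<subseteq> H"
  unfolding hsub_def using span_minimal[OF coroots_subset_H H_subspace] .

lemma coroot_mem_hsub: "\<alpha> \<in> R' \<Longrightarrow> tv \<alpha> \<in> T"
  unfolding hsub_def by (simp add: span_base)

lemma eval_eq_form_coroot: "\<alpha> \<in> R' \<Longrightarrow> h \<in> H \<Longrightarrow> \<alpha> h = B h (tv \<alpha>)"
  using tvec_represents subsystem_representable by blast

lemma hsub_invariants_zero: "x \<in> T \<Longrightarrow> (\<And>\<beta>. \<beta> \<in> R' \<Longrightarrow> \<beta> x = 0) \<Longrightarrow> x = 0"
  using coroot_span_invariants_zero unfolding hsub_def .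

lemma hsub_nondegenerate: "nondegenerate_on T"
  unfolding nondegenerate_on_def
proof (intro ballI impI)
  fix x assume x: "x \<in> T" and orth: "\<forall>y\<in>T. B x y = 0"
  have xH: "x \<in> H"
    using x hsub_subset_H by blast
  show "x = 0"
  proof (rule hsub_invariants_zero[OF x])
    fix \<beta> assume \<beta>: "\<beta> \<in> R'"
    show "\<beta> x = 0"
      using eval_eq_form_coroot[OF \<beta> xH] orth coroot_mem_hsub[OF \<beta>] by simp
  qed
qed

lemma hsub_is_cover: "is_cover smul B H R' T"
  unfolding is_cover_def
proof (intro conjI ballI impI)
  show "subspace T"
    by (rule hsub_subspace)
  show "tv \<alpha> \<in> T" if "\<alpha> \<in> aniso B H R'" for \<alpha>
    using that coroot_mem_hsub aniso_subsystem by simp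
qed (use hsub_subset_H hsub_nondegenerate in \<open>auto simp: nondegenerate_on_def\<close>)

lemma
  assumes "is_cover smul B H R' K"
  shows cover_subspace: "subspace K"
    and cover_subset_H: "K \<subseteq> H"
    and cover_coroot: "\<alpha> \<in> aniso B H R' \<Longrightarrow> tv \<alpha> \<in> K"
  using assms unfolding is_cover_def by simp_all

lemma hsub_subset_cover:
  assumes K: "is_cover smul B H R' K"
  shows "T \<subseteq> K"
proof -
  have "tv \<alpha> \<in> K" if "\<alpha> \<in> R'" for \<alpha>
  proof (cases "\<alpha> = zero_root")
    case True
    then show ?thesis
      using tvec_zero_root subspace_0[OF cover_subspace[OF K]] by simp
  next
    case False
    then show ?thesis
      using cover_coroot[OF K] that aniso_subsystem by simp
  qed
  then show ?thesis
    unfolding hsub_def using span_minimal[OF _ cover_subspace[OF K]] by (simp add: image_subset_iff)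
qed

lemma hsub_cover_subset: "is_cover smul B H R' K \<Longrightarrow> L T \<subseteq> L K"
  unfolding lie_cover_def using hsub_subset_cover by (intro span_mono) blast

lemma bracket_root_vectors_mem:
  assumes "is_cover smul B H R' K" and \<alpha>: "\<alpha> \<in> R' - {zero_root}" and \<beta>: "\<beta> \<in> R' - {zero_root}"
    and x: "x \<in> E \<alpha>" and y: "y \<in> E \<beta>"
  shows "br x y \<in> L K"
proof (cases "(\<lambda>h. \<alpha> h + \<beta> h) = zero_root")
  case True
  then have "\<beta> = (\<lambda>h. - \<alpha> h)"
    by (simp add: fun_eq_iff add_eq_0_iff2)
  then have "br x y = smul (B x y) (tv \<alpha>)"
    using bracket_opposite_root_vectors \<alpha> x y subsystem_roots by blast
  moreover have "tv \<alpha> \<in> L K"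
    using hsub_subset_cover[OF assms(1)] coroot_mem_hsub \<alpha> unfolding lie_cover_def
    by (blast intro: span_base)
  ultimately show ?thesis
    unfolding lie_cover_def by (simp add: span_scale)
next
  case False
  have xy: "br x y \<in> E (\<lambda>h. \<alpha> h + \<beta> h)"
    using bracket_root_spaces[OF x y] .
  show ?thesis
  proof (cases "br x y = 0")
    case False
    then have "(\<lambda>h. \<alpha> h + \<beta> h) \<in> R"
      using xy roots_iff lin_functional_plus subsystem_lin_functional \<alpha> \<beta> by blast
    then have "(\<lambda>h. \<alpha> h + \<beta> h) \<in> R'"
      using closed \<alpha> \<beta> unfolding closed_sub_def by blast
    then show ?thesis
      using root_vectors_subset_lie_cover xy \<open>(\<lambda>h. \<alpha> h + \<beta> h) \<noteq> zero_root\<close> by blast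
  qed (simp add: lie_cover_def span_zero)
qed

lemma bracket_cover_generators:
  assumes K: "K \<subseteq> H" and K': "is_cover smul B H R' K'"
    and a: "a \<in> K \<union> (\<Union>\<alpha>\<in>R' - {zero_root}. E \<alpha>)" and b: "b \<in> K' \<union> (\<Union>\<alpha>\<in>R' - {zero_root}. E \<alpha>)"
  shows "br a b \<in> L K'"
proof -
  have LK': "subspace (L K')"
    unfolding lie_cover_def by simp
  consider "a \<in> K" "b \<in> K'" | \<beta> where "a \<in> K" "\<beta> \<in> R' - {zero_root}" "b \<in> E \<beta>"
    | \<alpha> where "\<alpha> \<in> R' - {zero_root}" "a \<in> E \<alpha>" "b \<in> K'"
    | \<alpha> \<beta> where "\<alpha> \<in> R' - {zero_root}" "a \<in> E \<alpha>" "\<beta> \<in> R' - {zero_root}" "b \<in> E \<beta>"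
    using a b by blast
  then show ?thesis
  proof cases
    case 1
    then have "br a b = 0"
      using bracket_H_H K cover_subset_H[OF K'] by blast
    then show ?thesis
      using subspace_0[OF LK'] by simp
  next
    case (2 \<beta>)
    then have "br a b = smul (\<beta> a) b" "b \<in> L K'"
      using bracket_root_vector[of a b \<beta>] K root_vectors_subset_lie_cover[of \<beta> K'] by auto
    then show ?thesis
      using subspace_scale[OF LK'] by simp
  next
    case (3 \<alpha>)
    then have "br a b = - smul (\<alpha> b) a" "a \<in> L K'"
      using bracket_anticommute[of a b] bracket_root_vector[of b a \<alpha>] cover_subset_H[OF K']
        root_vectors_subset_lie_cover[of \<alpha> K'] by auto
    then show ?thesis
      using subspace_scale[OF LK'] subspace_neg[OF LK'] by simp
  next
    case (4 \<alpha> \<beta>)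
    show ?thesis
      using bracket_root_vectors_mem[OF K' 4(1) 4(3) 4(2) 4(4)] .
  qed
qed

lemma lie_cover_subalgebra:
  assumes K: "is_cover smul B H R' K"
  shows "lie_subalgebra smul br (L K)"
  unfolding lie_subalgebra_def
proof (intro conjI ballI)
  define G where "G = K \<union> (\<Union>\<alpha>\<in>R' - {zero_root}. E \<alpha>)"
  have LK: "L K = span G"
    unfolding G_def lie_cover_def ..
  then show sub: "subspace (L K)"
    by simp
  fix x y assume "x \<in> L K" "y \<in> L K"
  then have "x \<in> span G" "y \<in> span G"
    using LK by simp_all
  then show "br x y \<in> L K"
    using bracket_span_closed[OF sub bracket_cover_generators[OF cover_subset_H[OF K] K]]
    unfolding G_def by blast
qed

lemma hsub_cover_ideal:
  assumes K: "is_cover smul B H R' K"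
  shows "lie_ideal smul br (L K) (L T)"
  unfolding lie_ideal_def
proof (intro conjI ballI)
  define G where "G = (\<lambda>K. K \<union> (\<Union>\<alpha>\<in>R' - {zero_root}. E \<alpha>))"
  have L: "L K' = span (G K')" for K'
    unfolding G_def lie_cover_def ..
  then show sub: "subspace (L T)"
    by simp
  show "L T \<subseteq> L K"
    using hsub_cover_subset[OF K] .
  fix x y assume "x \<in> L K" "y \<in> L T"
  then have "x \<in> span (G K)" "y \<in> span (G T)"
    using L by simp_all
  then show "br x y \<in> L T"
    using bracket_span_closed[OF sub bracket_cover_generators[OF cover_subset_H[OF K] hsub_is_cover]]
    unfolding G_def by blast
qed

lemma root_space_line:
  assumes \<beta>: "\<beta> \<in> R' - {zero_root}"
  shows "\<exists>f. E \<beta> \<subseteq> span {f}"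
proof -
  have "(\<lambda>h. - \<beta> h) \<in> R"
    using neg_root_mem \<beta> subsystem_roots by blast
  moreover have "\<beta> \<in> aniso B H R"
    using \<beta> aniso_subsystem subsystem_roots unfolding aniso_def by auto
  ultimately show ?thesis
    using opposite_root_space_line[of "\<lambda>h. - \<beta> h"] by simp
qed

lemma lie_cover_finite_dim:
  assumes "is_cover smul B H R' K"
  shows "fin_dim smul (L K)"
proof -
  obtain F0 where F0: "finite F0" "H \<subseteq> span F0"
    using H_finite_dim unfolding fin_dim_def by blast
  obtain f where f: "\<And>\<beta>. \<beta> \<in> R' - {zero_root} \<Longrightarrow> E \<beta> \<subseteq> span {f \<beta>}"
    using root_space_line by metis
  define F where "F = F0 \<union> f ` (R' - {zero_root})"
  have "K \<subseteq> span F"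
    using cover_subset_H[OF assms] F0(2) span_mono[of F0 F] by (auto simp: F_def)
  moreover have "E \<beta> \<subseteq> span F" if "\<beta> \<in> R' - {zero_root}" for \<beta>
    using f[OF that] span_mono[of "{f \<beta>}" F] that by (auto simp: F_def)
  ultimately have "L K \<subseteq> span F"
    unfolding lie_cover_def by (intro span_minimal) auto
  moreover have "finite F"
    using F0(1) finite_subsystem by (simp add: F_def)
  ultimately show ?thesis
    unfolding fin_dim_def by blast
qed

definition cover_center :: "'a set \<Rightarrow> 'a set" where
  "cover_center K = {h \<in> K. \<forall>\<beta>\<in>R'. \<beta> h = 0}"

lemma cover_center_subspace:
  assumes K: "is_cover smul B H R' K"
  shows "subspace (cover_center K)"
  unfolding subspace_def
proof (intro conjI ballI allI)
  have lf: "\<And>\<beta>. \<beta> \<in> R' \<Longrightarrow> lin_functional smul H \<beta>"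
    using subsystem_lin_functional by blast
  have KH: "\<And>x. x \<in> cover_center K \<Longrightarrow> x \<in> K \<and> x \<in> H"
    using cover_subset_H[OF K] unfolding cover_center_def by blast
  show "0 \<in> cover_center K"
    using subspace_0[OF cover_subspace[OF K]] lin_functional_zero[OF lf] unfolding cover_center_def by blast
  fix x y c assume x: "x \<in> cover_center K" and y: "y \<in> cover_center K"
  have "\<beta> (x + y) = 0" "\<beta> (smul c x) = 0" if \<beta>: "\<beta> \<in> R'" for \<beta>
  proof -
    have "\<beta> x = 0" "\<beta> y = 0"
      using x y \<beta> unfolding cover_center_def by blast+
    then show "\<beta> (x + y) = 0" "\<beta> (smul c x) = 0"
      using KH[OF x] KH[OF y] lin_functional_add[OF lf[OF \<beta>]] lin_functional_scale[OF lf[OF \<beta>]]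
      by simp_all
  qed
  then show "x + y \<in> cover_center K" "smul c x \<in> cover_center K"
    using KH[OF x] KH[OF y] subspace_add[OF cover_subspace[OF K]] subspace_scale[OF cover_subspace[OF K]]
    unfolding cover_center_def by simp_all
qed

lemma cover_subset_lie_cover: "K \<subseteq> L K"
  unfolding lie_cover_def using span_superset by blast

lemma cover_center_subset: "cover_center K \<subseteq> L K"
  using cover_subset_lie_cover unfolding cover_center_def by blast

lemma cover_center_central:
  assumes K: "is_cover smul B H R' K" and z: "z \<in> cover_center K" and x: "x \<in> L K"
  shows "br x z = 0"
proof -
  have zH: "z \<in> H"
    using z cover_subset_H[OF K] unfolding cover_center_def by blast
  have gen: "br a z = 0" if "a \<in> K \<union> (\<Union>\<alpha>\<in>R' - {zero_root}. E \<alpha>)" for a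
  proof -
    have "br z a = 0"
      using that z zH bracket_H_H cover_subset_H[OF K] bracket_root_vector[of z a]
      unfolding cover_center_def by auto
    then show ?thesis
      using bracket_anticommute[of a z] by simp
  qed
  have "br x z \<in> {0}"
    by (rule bracket_span_closed[of "{0}" "K \<union> (\<Union>\<alpha>\<in>R' - {zero_root}. E \<alpha>)" "{z}"])
      (use x gen in \<open>simp_all add: lie_cover_def span_base\<close>)
  then show ?thesis
    by simp
qed

text \<open>The splitting \<open>k = t + (k - t)\<close> takes for \<open>t \<in> T\<close> the representer of \<open>B k\<close> on the
  non-degenerate space \<open>T\<close>; then \<open>k - t\<close> is killed by every \<open>\<beta> = B (-) t\<^sub>\<beta>\<close>.\<close>

lemma cover_splits_hsub_center:
  assumes K: "is_cover smul B H R' K" and k: "k \<in> K"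
  obtains t where "t \<in> T" "k - t \<in> cover_center K"
proof -
  obtain t where t: "t \<in> T" "\<forall>y\<in>T. B k y = B t y"
    using nondegenerate_subspace_representer[OF hsub_subspace _ _ hsub_nondegenerate, of "tv ` R'" k]
      finite_subsystem unfolding hsub_def by blast
  have kt: "k - t \<in> K"
    using k t(1) hsub_subset_cover[OF K] subspace_diff[OF cover_subspace[OF K]] by blast
  have "\<beta> (k - t) = 0" if \<beta>: "\<beta> \<in> R'" for \<beta>
  proof -
    have "\<beta> (k - t) = B k (tv \<beta>) - B t (tv \<beta>)"
      using eval_eq_form_coroot[OF \<beta>, of "k - t"] kt cover_subset_H[OF K] by (auto simp: form_diff_left)
    then show ?thesis
      using t(2) coroot_mem_hsub[OF \<beta>] by simp
  qed
  then have "k - t \<in> cover_center K"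
    using kt unfolding cover_center_def by blast
  then show thesis
    using that t(1) by blast
qed

lemma lie_cover_eq_hsub_plus_center:
  assumes K: "is_cover smul B H R' K"
  shows "L K = {s + z |s z. s \<in> L T \<and> z \<in> cover_center K}"
proof
  have sums: "subspace {s + z |s z. s \<in> L T \<and> z \<in> cover_center K}"
    using subspace_sums[OF _ cover_center_subspace[OF K]] unfolding lie_cover_def by simp
  have k_mem: "k \<in> {s + z |s z. s \<in> L T \<and> z \<in> cover_center K}" if k: "k \<in> K" for k
  proof -
    obtain t where "t \<in> T" "k - t \<in> cover_center K"
      using cover_splits_hsub_center[OF K k] .
    moreover have "k = t + (k - t)"
      by simp
    ultimately show ?thesis
      using cover_subset_lie_cover by blast
  qed
  have u_mem: "u \<in> {s + z |s z. s \<in> L T \<and> z \<in> cover_center K}"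
    if "u \<in> (\<Union>\<alpha>\<in>R' - {zero_root}. E \<alpha>)" for u
  proof -
    have "u \<in> L T"
      using that root_vectors_subset_lie_cover by blast
    moreover have "u = u + 0" "0 \<in> cover_center K"
      using subspace_0[OF cover_center_subspace[OF K]] by simp_all
    ultimately show ?thesis
      by blast
  qed
  have "K \<union> (\<Union>\<alpha>\<in>R' - {zero_root}. E \<alpha>) \<subseteq> {s + z |s z. s \<in> L T \<and> z \<in> cover_center K}"
    using k_mem u_mem by blast
  then show "L K \<subseteq> {s + z |s z. s \<in> L T \<and> z \<in> cover_center K}"
    unfolding lie_cover_def[of smul br H R' K] using span_minimal sums by blast
next
  have "subspace (L K)"
    unfolding lie_cover_def by simp
  then show "{s + z |s z. s \<in> L T \<and> z \<in> cover_center K} \<subseteq> L K"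
    using hsub_cover_subset[OF K] cover_center_subset subspace_add by blast
qed

lemma lie_cover_decomposition:
  assumes K: "subspace K" "K \<subseteq> H" and x: "x \<in> L K"
  obtains c where "c zero_root \<in> K" "\<And>\<alpha>. \<alpha> \<in> R' \<Longrightarrow> c \<alpha> \<in> E \<alpha>" "x = sum c R'"
proof -
  define D where "D = {x. \<exists>c. c zero_root \<in> K \<and> (\<forall>\<alpha>\<in>R'. c \<alpha> \<in> E \<alpha>) \<and> x = sum c R'}"
  have single: "y \<in> D" if "\<beta> \<in> R'" "y \<in> E \<beta>" "\<beta> = zero_root \<Longrightarrow> y \<in> K" for \<beta> y
    unfolding D_def using that subspace_0[OF K(1)] subspace_0[OF root_space_subspace] finite_subsystem
    by (intro CollectI exI[of _ "\<lambda>\<alpha>. if \<alpha> = \<beta> then y else 0"]) auto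
  have "subspace D"
    unfolding subspace_def
  proof (intro conjI ballI allI)
    show "0 \<in> D"
      using single[OF zero_root_mem] subspace_0[OF K(1)] K(2) root_space_zero by blast
    show "x + y \<in> D" if x: "x \<in> D" and y: "y \<in> D" for x y
    proof -
      obtain c where c: "c zero_root \<in> K" "\<forall>\<alpha>\<in>R'. c \<alpha> \<in> E \<alpha>" "x = sum c R'"
        using x unfolding D_def by blast
      obtain d where d: "d zero_root \<in> K" "\<forall>\<alpha>\<in>R'. d \<alpha> \<in> E \<alpha>" "y = sum d R'"
        using y unfolding D_def by blast
      show ?thesis
        unfolding D_def using c d subspace_add[OF K(1)] subspace_add[OF root_space_subspace]
        by (intro CollectI exI[of _ "\<lambda>\<alpha>. c \<alpha> + d \<alpha>"]) (simp add: sum.distrib)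
    qed
    show "smul a x \<in> D" if x: "x \<in> D" for a x
    proof -
      obtain c where c: "c zero_root \<in> K" "\<forall>\<alpha>\<in>R'. c \<alpha> \<in> E \<alpha>" "x = sum c R'"
        using x unfolding D_def by blast
      show ?thesis
        unfolding D_def using c subspace_scale[OF K(1)] subspace_scale[OF root_space_subspace]
        by (intro CollectI exI[of _ "\<lambda>\<alpha>. smul a (c \<alpha>)"]) (simp add: scale_sum_right)
    qed
  qed
  moreover have "K \<subseteq> D"
    using single[OF zero_root_mem] K(2) root_space_zero by blast
  moreover have "E \<beta> \<subseteq> D" if "\<beta> \<in> R' - {zero_root}" for \<beta>
    using single that by blast
  ultimately have "L K \<subseteq> D"
    unfolding lie_cover_def by (intro span_minimal) auto
  then show thesis
    using that x unfolding D_def by blast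
qed

lemma lie_cover_root_spaces_independent:
  assumes "\<And>\<alpha>. \<alpha> \<in> R' \<Longrightarrow> c \<alpha> \<in> E \<alpha>" "sum c R' = 0" "\<alpha> \<in> R'"
  shows "c \<alpha> = 0"
  using root_spaces_independent[of R' c] assms finite_subsystem subsystem_lin_functional by blast

lemma hsub_separates_roots:
  assumes \<alpha>: "\<alpha> \<in> R'" and \<beta>: "\<beta> \<in> R'" and "\<alpha> \<noteq> \<beta>"
  shows "\<exists>k\<in>T. \<alpha> k \<noteq> \<beta> k"
proof (rule ccontr)
  assume "\<not> (\<exists>k\<in>T. \<alpha> k \<noteq> \<beta> k)"
  then have "B (tv \<alpha> - tv \<beta>) y = 0" if y: "y \<in> T" for y
  proof -
    have "y \<in> H"
      using y hsub_subset_H by blast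
    then have "B (tv \<alpha> - tv \<beta>) y = \<alpha> y - \<beta> y"
      using eval_eq_form_coroot[OF \<alpha>] eval_eq_form_coroot[OF \<beta>]
        form_symmetric[of "tv \<alpha>" y] form_symmetric[of "tv \<beta>" y]
      by (simp add: form_diff_left)
    then show ?thesis
      using y \<open>\<not> (\<exists>k\<in>T. \<alpha> k \<noteq> \<beta> k)\<close> by simp
  qed
  moreover have "tv \<alpha> - tv \<beta> \<in> T"
    using coroot_mem_hsub[OF \<alpha>] coroot_mem_hsub[OF \<beta>] subspace_diff[OF hsub_subspace] by blast
  ultimately have "tv \<alpha> = tv \<beta>"
    using hsub_nondegenerate unfolding nondegenerate_on_def by force
  then have "\<alpha> h = \<beta> h" if "h \<in> H" for h
    using that eval_eq_form_coroot[OF \<alpha>] eval_eq_form_coroot[OF \<beta>] by simp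
  then show False
    using lin_functional_eqI subsystem_lin_functional \<alpha> \<beta> \<open>\<alpha> \<noteq> \<beta>\<close> by blast
qed

lemma coroot_mem_ideal:
  assumes I: "lie_ideal smul br (L T) I" and \<beta>: "\<beta> \<in> R' - {zero_root}"
    and y: "y \<in> I" "y \<in> E \<beta>" "y \<noteq> 0"
  shows "tv \<beta> \<in> I"
proof -
  obtain f where f: "f \<in> E (\<lambda>h. - \<beta> h)" "B y f \<noteq> 0"
    using root_space_pairing subsystem_lin_functional \<beta> y(2,3) by blast
  have "(\<lambda>h. - \<beta> h) \<in> R' - {zero_root}"
    using \<beta> neg_root_mem by (auto simp: fun_eq_iff)
  then have "br y f \<in> I"
    using lie_ideal_bracket_left[OF I _ y(1)] root_vectors_subset_lie_cover f(1) by blast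
  moreover have "br y f = smul (B y f) (tv \<beta>)"
    using bracket_opposite_root_vectors \<beta> subsystem_roots y(2) f(1) by blast
  ultimately have "smul (1 / B y f) (smul (B y f) (tv \<beta>)) \<in> I"
    using I subspace_scale unfolding lie_ideal_def by metis
  then show ?thesis
    using f(2) by simp
qed

lemma root_space_subset_ideal:
  assumes I: "lie_ideal smul br (L T) I" and \<beta>: "\<beta> \<in> R'" "tv \<beta> \<in> I"
    and \<gamma>: "\<gamma> \<in> R' - {zero_root}" "\<gamma> (tv \<beta>) \<noteq> 0"
  shows "E \<gamma> \<subseteq> I"
proof
  fix z assume z: "z \<in> E \<gamma>"
  have "br (tv \<beta>) z \<in> I"
    using lie_ideal_bracket_left[OF I _ \<beta>(2)] root_vectors_subset_lie_cover \<gamma>(1) z by blast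
  then have "smul (1 / \<gamma> (tv \<beta>)) (smul (\<gamma> (tv \<beta>)) z) \<in> I"
    using bracket_root_vector[OF _ z] tvec_mem subsystem_representable \<beta>(1) I subspace_scale
    unfolding lie_ideal_def by metis
  then show "z \<in> I"
    using \<gamma>(2) by simp
qed

lemma coroot_mem_ideal_linked:
  assumes I: "lie_ideal smul br (L T) I" and \<alpha>: "\<alpha> \<in> R'" "tv \<alpha> \<in> I"
    and \<gamma>: "\<gamma> \<in> R' - {zero_root}" "rform B H \<alpha> \<gamma> \<noteq> 0"
  shows "tv \<gamma> \<in> I"
proof -
  have "rform B H \<alpha> \<gamma> = \<gamma> (tv \<alpha>)"
    using rform_commute[of \<alpha> \<gamma>] rform_eval[of \<gamma> \<alpha>] subsystem_representable \<alpha>(1) \<gamma>(1) by simp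
  then have "E \<gamma> \<subseteq> I"
    using root_space_subset_ideal[OF I \<alpha> \<gamma>(1)] \<gamma>(2) by simp
  moreover obtain z where "z \<in> E \<gamma>" "z \<noteq> 0"
    using \<gamma>(1) subsystem_roots roots_iff by blast
  ultimately show ?thesis
    using coroot_mem_ideal[OF I \<gamma>(1)] by blast
qed

text \<open>Connectedness of \<open>R'\<^sup>\<times>\<close> propagates \<open>t\<^sub>\<beta> \<in> I\<close> from one anisotropic root to all of them.\<close>

lemma all_coroots_mem_ideal:
  assumes I: "lie_ideal smul br (L T) I" and \<beta>: "\<beta> \<in> R' - {zero_root}" "tv \<beta> \<in> I"
  shows "{\<gamma> \<in> R' - {zero_root}. tv \<gamma> \<in> I} = R' - {zero_root}"
proof (rule ccontr)
  define A1 where "A1 = {\<gamma> \<in> R' - {zero_root}. tv \<gamma> \<in> I}"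
  assume "A1 \<noteq> R' - {zero_root}"
  then have "A1 \<noteq> {}" "(R' - {zero_root}) - A1 \<noteq> {}" "A1 \<union> ((R' - {zero_root}) - A1) = aniso B H R'"
    using \<beta> aniso_subsystem unfolding A1_def by blast+
  moreover have "\<not> (A1 \<noteq> {} \<and> A2 \<noteq> {} \<and> A1 \<union> A2 = aniso B H R' \<and>
      (\<forall>a\<in>A1. \<forall>b\<in>A2. rform B H a b = 0))" for A2
    using subsystem_connected unfolding connected_roots_def by blast
  ultimately obtain a b where "a \<in> A1" "b \<in> (R' - {zero_root}) - A1" "rform B H a b \<noteq> 0"
    by blast
  then show False
    using coroot_mem_ideal_linked[OF I] unfolding A1_def by blast
qed

lemma hsub_cover_subset_ideal:
  assumes I: "lie_ideal smul br (L T) I" and coroots: "\<And>\<gamma>. \<gamma> \<in> R' - {zero_root} \<Longrightarrow> tv \<gamma> \<in> I"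
  shows "L T \<subseteq> I"
proof -
  have I_sub: "subspace I"
    using I unfolding lie_ideal_def by blast
  have "tv \<gamma> \<in> I" if "\<gamma> \<in> R'" for \<gamma>
    using coroots that tvec_zero_root subspace_0[OF I_sub] by (cases "\<gamma> = zero_root") auto
  then have "T \<subseteq> I"
    unfolding hsub_def using span_minimal[OF _ I_sub] by blast
  moreover have "E \<gamma> \<subseteq> I" if \<gamma>: "\<gamma> \<in> R' - {zero_root}" for \<gamma>
    using root_space_subset_ideal[OF I _ coroots[OF \<gamma>] \<gamma> coroot_eval_nonzero[OF \<gamma>]] \<gamma> by blast
  ultimately have "T \<union> (\<Union>\<alpha>\<in>R' - {zero_root}. E \<alpha>) \<subseteq> I"
    by blast
  then show "L T \<subseteq> I"
    unfolding lie_cover_def using span_minimal[OF _ I_sub] by blast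
qed

lemma ideal_with_root_vector:
  assumes I: "lie_ideal smul br (L T) I" and \<beta>: "\<beta> \<in> R' - {zero_root}"
    and y: "y \<in> I" "y \<in> E \<beta>" "y \<noteq> 0"
  shows "I = L T"
proof -
  have "tv \<gamma> \<in> I" if "\<gamma> \<in> R' - {zero_root}" for \<gamma>
    using all_coroots_mem_ideal[OF I \<beta> coroot_mem_ideal[OF I \<beta> y]] that by blast
  then have "L T \<subseteq> I"
    using hsub_cover_subset_ideal[OF I] by blast
  then show ?thesis
    using I unfolding lie_ideal_def by blast
qed

lemma ideal_without_root_vectors:
  assumes I: "lie_ideal smul br (L T) I"
    and none: "\<And>\<beta> y. \<beta> \<in> R' - {zero_root} \<Longrightarrow> y \<in> I \<Longrightarrow> y \<in> E \<beta> \<Longrightarrow> y = 0"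
  shows "I = {0}"
proof -
  have "x = 0" if x: "x \<in> I" for x
  proof -
    have I_sub: "subspace I" "I \<subseteq> L T"
      using I unfolding lie_ideal_def by blast+
    obtain c where c: "c zero_root \<in> T" "\<And>\<alpha>. \<alpha> \<in> R' \<Longrightarrow> c \<alpha> \<in> E \<alpha>" "x = sum c R'"
      using lie_cover_decomposition[of T x] hsub_subset_H x I_sub unfolding hsub_def by auto
    have "c \<alpha> \<in> I" if "\<alpha> \<in> R'" for \<alpha>
    proof (rule weight_components_mem[OF hsub_subset_H I_sub(1) _ finite_subsystem _ c(2) _ that])
      show "br k y \<in> I" if "k \<in> T" "y \<in> I" for k y
        using I that span_superset unfolding lie_ideal_def lie_cover_def by blast
    qed (use hsub_separates_roots x c(3) in auto)
    then have "c \<alpha> = 0" if "\<alpha> \<in> R' - {zero_root}" for \<alpha>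
      using none c(2) that by blast
    then have x_eq: "x = c zero_root"
      using c(3) sum.remove[OF finite_subsystem zero_root_mem, of c] by simp
    have "\<beta> x = 0" if \<beta>: "\<beta> \<in> R' - {zero_root}" for \<beta>
    proof -
      obtain z where z: "z \<in> E \<beta>" "z \<noteq> 0"
        using \<beta> subsystem_roots roots_iff by blast
      have "br x z \<in> I"
        using lie_ideal_bracket_left[OF I _ x] root_vectors_subset_lie_cover \<beta> z(1) by blast
      moreover have "br x z = smul (\<beta> x) z"
        using bracket_root_vector[OF _ z(1)] x_eq c(1) hsub_subset_H by blast
      ultimately have "smul (\<beta> x) z = 0"
        using none[OF \<beta>] z(1) subspace_scale[OF root_space_subspace] by metis
      then show ?thesis
        using z(2) by simp
    qed
    then show "x = 0"
      using coroot_span_invariants_zero[of x] x_eq c(1) unfolding hsub_def by force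
  qed
  then show ?thesis
    using I subspace_0 unfolding lie_ideal_def by blast
qed

lemma hsub_cover_nonabelian: "\<exists>x\<in>L T. \<exists>y\<in>L T. br x y \<noteq> 0"
proof -
  obtain \<alpha> where \<alpha>: "\<alpha> \<in> R' - {zero_root}"
    using nonzero_root_exists by blast
  obtain x where x: "x \<in> E \<alpha>" "x \<noteq> 0"
    using \<alpha> subsystem_roots roots_iff by blast
  have "tv \<alpha> \<in> T"
    using coroot_mem_hsub \<alpha> by blast
  then have "br (tv \<alpha>) x = smul (\<alpha> (tv \<alpha>)) x"
    using bracket_root_vector[OF _ x(1)] hsub_subset_H by blast
  then have "br (tv \<alpha>) x \<noteq> 0"
    using coroot_eval_nonzero[OF \<alpha>] x(2) by simp
  moreover have "tv \<alpha> \<in> L T"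
    using \<open>tv \<alpha> \<in> T\<close> cover_subset_lie_cover by blast
  moreover have "x \<in> L T"
    using root_vectors_subset_lie_cover[OF \<alpha>] x(1) by blast
  ultimately show ?thesis
    by blast
qed

lemma hsub_cover_simple: "simple_lie smul br (L T)"
  unfolding simple_lie_def
proof (intro conjI allI impI)
  fix I assume I: "lie_ideal smul br (L T) I"
  show "I = {0} \<or> I = L T"
  proof (cases "\<exists>\<beta> y. \<beta> \<in> R' - {zero_root} \<and> y \<in> I \<and> y \<in> E \<beta> \<and> y \<noteq> 0")
    case True
    then show ?thesis
      using ideal_with_root_vector[OF I] by blast
  next
    case False
    then show ?thesis
      using ideal_without_root_vectors[OF I] by blast
  qed
qed (use lie_cover_subalgebra[OF hsub_is_cover] hsub_cover_nonabelian in blast)+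

lemma hsub_cover_weight_vector:
  assumes \<alpha>: "\<alpha> \<in> R'"
  obtains x where "x \<in> L T" "x \<noteq> 0" "\<And>h. h \<in> T \<Longrightarrow> br h x = smul (\<alpha> h) x"
proof (cases "\<alpha> = zero_root")
  case True
  obtain \<gamma> where \<gamma>: "\<gamma> \<in> R' - {zero_root}"
    using nonzero_root_exists by blast
  have "tv \<gamma> \<noteq> 0"
    using coroot_eval_nonzero[OF \<gamma>] lin_functional_zero[OF subsystem_lin_functional] \<gamma> by force
  moreover have "br h (tv \<gamma>) = smul (\<alpha> h) (tv \<gamma>)" if "h \<in> T" for h
  proof -
    have "h \<in> H" "tv \<gamma> \<in> H"
      using that coroot_mem_hsub \<gamma> hsub_subset_H by blast+
    then show ?thesis
      using True bracket_H_H by simp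
  qed
  moreover have "tv \<gamma> \<in> L T"
    using coroot_mem_hsub \<gamma> cover_subset_lie_cover by blast
  ultimately show thesis
    using that by blast
next
  case False
  obtain y where y: "y \<in> E \<alpha>" "y \<noteq> 0"
    using \<alpha> subsystem_roots roots_iff by blast
  moreover have "y \<in> L T"
    using root_vectors_subset_lie_cover \<alpha> False y(1) by blast
  moreover have "br h y = smul (\<alpha> h) y" if "h \<in> T" for h
    using bracket_root_vector[OF _ y(1)] that hsub_subset_H by blast
  ultimately show thesis
    using that by blast
qed

lemma restricted_root_mem:
  assumes \<alpha>: "\<alpha> \<in> R'"
  shows "restrict_fun \<alpha> T \<in> roots_in smul br (L T) T"
proof -
  obtain x where x: "x \<in> L T" "x \<noteq> 0" "\<And>h. h \<in> T \<Longrightarrow> br h x = smul (\<alpha> h) x"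
    using hsub_cover_weight_vector[OF \<alpha>] by blast
  then have "x \<in> root_space smul br T (restrict_fun \<alpha> T) \<inter> L T"
    unfolding root_space_def restrict_fun_def by simp
  then have "root_space smul br T (restrict_fun \<alpha> T) \<inter> L T \<noteq> {0}"
    using x(2) by blast
  moreover have "lin_functional smul T (restrict_fun \<alpha> T)"
    using lin_functional_restrict[OF subsystem_lin_functional[OF \<alpha>] hsub_subspace hsub_subset_H] .
  ultimately show ?thesis
    unfolding roots_in_def by blast
qed

lemma root_is_restricted:
  assumes \<beta>: "\<beta> \<in> roots_in smul br (L T) T"
  shows "\<beta> \<in> (\<lambda>\<alpha>. restrict_fun \<alpha> T) ` R'"
proof -
  have lf: "lin_functional smul T \<beta>" and "root_space smul br T \<beta> \<inter> L T \<noteq> {0}"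
    using \<beta> unfolding roots_in_def by blast+
  moreover have "0 \<in> root_space smul br T \<beta> \<inter> L T"
    unfolding root_space_def lie_cover_def by (simp add: span_zero)
  ultimately obtain x where x: "x \<in> root_space smul br T \<beta>" "x \<in> L T" "x \<noteq> 0"
    by blast
  obtain c where c: "\<And>\<alpha>. \<alpha> \<in> R' \<Longrightarrow> c \<alpha> \<in> E \<alpha>" "x = sum c R'"
    using lie_cover_decomposition[of T x] hsub_subset_H x(2) unfolding hsub_def by auto
  have "smul (\<alpha> h - \<beta> h) (c \<alpha>) = 0" if h: "h \<in> T" and \<alpha>: "\<alpha> \<in> R'" for h \<alpha>
  proof (rule lie_cover_root_spaces_independent[OF _ _ \<alpha>])
    show "smul (\<gamma> h - \<beta> h) (c \<gamma>) \<in> E \<gamma>" if "\<gamma> \<in> R'" for \<gamma>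
      using c(1)[OF that] subspace_scale[OF root_space_subspace] by blast
    have hH: "h \<in> H"
      using h hsub_subset_H by blast
    have "(\<Sum>\<gamma>\<in>R'. smul (\<gamma> h) (c \<gamma>)) = br h x"
      unfolding c(2) bracket_sum_right using bracket_root_vector[OF hH c(1)] by simp
    also have "\<dots> = (\<Sum>\<gamma>\<in>R'. smul (\<beta> h) (c \<gamma>))"
      using x(1) h unfolding root_space_def c(2) by (simp add: scale_sum_right)
    finally show "(\<Sum>\<gamma>\<in>R'. smul (\<gamma> h - \<beta> h) (c \<gamma>)) = 0"
      by (simp add: scale_left_diff_distrib sum_subtractf)
  qed
  moreover obtain \<alpha> where \<alpha>: "\<alpha> \<in> R'" "c \<alpha> \<noteq> 0"
    using x(3) c(2) sum.neutral by force
  ultimately have "\<beta> h = \<alpha> h" if "h \<in> T" for h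
    using that by fastforce
  then have "\<beta> = restrict_fun \<alpha> T"
    using lf unfolding lin_functional_def restrict_fun_def by (auto simp: fun_eq_iff)
  then show ?thesis
    using \<alpha>(1) by blast
qed

lemma roots_hsub_cover: "roots_in smul br (L T) T = (\<lambda>\<alpha>. restrict_fun \<alpha> T) ` R'"
  using restricted_root_mem root_is_restricted by blast

lemma lie_cover_reductive: "is_cover smul B H R' K \<Longrightarrow> reductive_lie smul br (L K)"
  by (rule reductive_if_simple_ideal_plus_center[OF lie_cover_subalgebra hsub_cover_ideal
        hsub_cover_simple cover_center_subspace cover_center_subset cover_center_central
        lie_cover_eq_hsub_plus_center])

end

theorem proposition5p13:
  fixes smul :: "complex \<Rightarrow> 'a::ab_group_add \<Rightarrow> 'a"
    and br :: "'a \<Rightarrow> 'a \<Rightarrow> 'a"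
    and B :: "'a \<Rightarrow> 'a \<Rightarrow> complex"
    and H H' :: "'a set"
    and R' :: "('a \<Rightarrow> complex) set"
  assumes "eala smul br B H"
    and "subsystem smul B H (roots smul br H) R'"
    and "closed_sub (roots smul br H) R'"
    and "finite R'"
    and "is_cover smul B H R' H'"
  shows "lie_subalgebra smul br (lie_cover smul br H R' H') \<and>
         fin_dim smul (lie_cover smul br H R' H') \<and>
         reductive_lie smul br (lie_cover smul br H R' H') \<and>
         is_cover smul B H R' (hsub smul B H R') \<and>
         fin_dim smul (lie_cover smul br H R' (hsub smul B H R')) \<and>
         simple_lie smul br (lie_cover smul br H R' (hsub smul B H R')) \<and>
         roots_in smul br (lie_cover smul br H R' (hsub smul B H R')) (hsub smul B H R')
           = (\<lambda>\<alpha>. restrict_fun \<alpha> (hsub smul B H R')) ` R'"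
proof -
  interpret finite_closed_subsystem smul br B H R'
    by (intro finite_closed_subsystem.intro extended_affine.intro finite_closed_subsystem_axioms.intro)
      (fact assms)+
  show ?thesis
    using lie_cover_subalgebra[OF assms(5)] lie_cover_finite_dim[OF assms(5)]
      lie_cover_reductive[OF assms(5)] hsub_is_cover lie_cover_finite_dim[OF hsub_is_cover]
      hsub_cover_simple roots_hsub_cover
    by blast
qed

end
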